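(* Let $\rho,\sigma$ be qubit states. There exists a time-covariant channel on the qubit transforming $\rho$ into $\sigma$ if and only if $$\partial_\theta^2(\Delta\Phi_\eta)\big|_{\theta=0}\ge0\quad\text{and}\quad\partial_\theta^2(\Delta\Phi_\eta)\big|_{\theta=\pi}\ge0$$ for all $0<r\le1$ and $0\le\phi<2\pi$, where $\eta=\eta(r,\theta,\phi)$. Equivalently, if and only if $\partial_\theta^2(\Delta H_\eta)|_{\theta=0}\ge0$ and $\partial_\theta^2(\Delta H_\eta)|_{\theta=\pi}\ge0$ for all such $r,\phi$.
   Context: The system $A$ is a qubit with Hamiltonian $\sigma_z$; the group $G=U(1)$ acts by $U(t)=e^{-i\sigma_zt}$, $t\in[0,2\pi)$, with normalized measure $dt/2\pi$. A channel $\mathcal{E}$ on the qubit is time-covariant if $\mathcal{E}(U(t)XU(t)^\dagger)=U(t)\mathcal{E}(X)U(t)^\dagger$ for all $t,X$. The reference $R$ is a qubit with Hamiltonian $-\sigma_z$, i.e. $U_R(t)=e^{i\sigma_zt}$. $\mathcal{G}(M)=\int_0^{2\pi}\frac{dt}{2\pi}(U_R(t)\otimes U(t))M(U_R(t)\otimes U(t))^\dagger$. For a qubit state $\tau$, $\Phi_\eta(\tau):=\inf_{X\ge0}\{\mathrm{tr}X:\mathbb{1}\otimes X-\mathcal{G}(\eta\otimes\tau)\ge0\}$ and $H_\eta(\tau)=-\log_2\Phi_\eta(\tau)$. $\Delta\Phi_\eta:=\Phi_\eta(\rho)-\Phi_\eta(\sigma)$ and $\Delta H_\eta:=H_\eta(\sigma)-H_\eta(\rho)$.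 Reference states are parametrized by spherical Bloch coordinates: $\eta(r,\theta,\phi)=\tfrac12(\mathbb{1}+r\sin\theta\cos\phi\,\sigma_x+r\sin\theta\sin\phi\,\sigma_y+r\cos\theta\,\sigma_z)$ with $0\le r\le1$, $\theta\in[0,\pi]$, $\phi\in[0,2\pi)$. *)

theory Defs
  imports "HOL-Analysis.Analysis" "Jordan_Normal_Form.Matrix"
begin

(* Matrices are Jordan_Normal_Form complex matrices; all objects are 2x2 (qubit)
   or 4x4 (reference qubit R tensor system qubit A, R is the first factor). *)

definition mtrace :: "complex mat \<Rightarrow> complex" where
  "mtrace A = (\<Sum>i<dim_row A. A $$ (i,i))"

definition madj :: "complex mat \<Rightarrow> complex mat" where
  "madj A = mat (dim_col A) (dim_row A) (\<lambda>(i,j). cnj (A $$ (j,i)))"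

definition psd :: "nat \<Rightarrow> complex mat \<Rightarrow> bool" where
  "psd n A \<longleftrightarrow> A \<in> carrier_mat n n \<and>
     (\<forall>x :: nat \<Rightarrow> complex.
        let q = (\<Sum>i<n. \<Sum>j<n. cnj (x i) * A $$ (i,j) * x j) in Im q = 0 \<and> Re q \<ge> 0)"

definition kron :: "complex mat \<Rightarrow> complex mat \<Rightarrow> complex mat" where
  "kron A B = mat (dim_row A * dim_row B) (dim_col A * dim_col B)
     (\<lambda>(i,j). A $$ (i div dim_row B, j div dim_col B) * B $$ (i mod dim_row B, j mod dim_col B))"

definition qubit_state :: "complex mat \<Rightarrow> bool" where
  "qubit_state \<rho> \<longleftrightarrow> psd 2 \<rho> \<and> mtrace \<rho> = 1"

definition sigma_x :: "complex mat" where "sigma_x = mat_of_rows_list 2 [[0,1],[1,0]]"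
definition sigma_y :: "complex mat" where "sigma_y = mat_of_rows_list 2 [[0,-\<i>],[\<i>,0]]"
definition sigma_z :: "complex mat" where "sigma_z = mat_of_rows_list 2 [[1,0],[0,-1]]"

(* U(t) = exp(-i sigma_z t) = diag(e^{-it}, e^{it}) *)
definition U :: "real \<Rightarrow> complex mat" where
  "U t = mat_of_rows_list 2 [[exp (-\<i> * t), 0], [0, exp (\<i> * t)]]"

(* U_R(t) = exp(i sigma_z t) = diag(e^{it}, e^{-it}) *)
definition U_R :: "real \<Rightarrow> complex mat" where
  "U_R t = mat_of_rows_list 2 [[exp (\<i> * t), 0], [0, exp (-\<i> * t)]]"

definition qubit_linear :: "(complex mat \<Rightarrow> complex mat) \<Rightarrow> bool" where
  "qubit_linear E \<longleftrightarrow>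
     (\<forall>X \<in> carrier_mat 2 2. E X \<in> carrier_mat 2 2) \<and>
     (\<forall>X \<in> carrier_mat 2 2. \<forall>Y \<in> carrier_mat 2 2. \<forall>a b :: complex.
        E (a \<cdot>\<^sub>m X + b \<cdot>\<^sub>m Y) = a \<cdot>\<^sub>m E X + b \<cdot>\<^sub>m E Y)"

(* (id_n \<otimes> E)(M) for M of dimension n*2 (ancilla of dimension n first) *)
definition id_tensor :: "nat \<Rightarrow> (complex mat \<Rightarrow> complex mat) \<Rightarrow> complex mat \<Rightarrow> complex mat" where
  "id_tensor n E M = mat (n*2) (n*2)
     (\<lambda>(i,j). E (mat 2 2 (\<lambda>(b,d). M $$ (2 * (i div 2) + b, 2 * (j div 2) + d)))
               $$ (i mod 2, j mod 2))"

definition completely_positive :: "(complex mat \<Rightarrow> complex mat) \<Rightarrow> bool" where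
  "completely_positive E \<longleftrightarrow>
     (\<forall>n::nat. \<forall>M. n \<ge> 1 \<longrightarrow> psd (n*2) M \<longrightarrow> psd (n*2) (id_tensor n E M))"

definition trace_preserving :: "(complex mat \<Rightarrow> complex mat) \<Rightarrow> bool" where
  "trace_preserving E \<longleftrightarrow> (\<forall>X \<in> carrier_mat 2 2. mtrace (E X) = mtrace X)"

definition qubit_channel :: "(complex mat \<Rightarrow> complex mat) \<Rightarrow> bool" where
  "qubit_channel E \<longleftrightarrow> qubit_linear E \<and> completely_positive E \<and> trace_preserving E"

definition time_covariant :: "(complex mat \<Rightarrow> complex mat) \<Rightarrow> bool" where
  "time_covariant E \<longleftrightarrow>
     (\<forall>t \<in> {0..<2*pi}. \<forall>X \<in> carrier_mat 2 2.
        E (U t * X * madj (U t)) = U t * E X * madj (U t))"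

definition twirl :: "complex mat \<Rightarrow> complex mat" where
  "twirl M = mat 4 4 (\<lambda>(i,j).
     integral {0..2*pi} (\<lambda>t. (kron (U_R t) (U t) * M * madj (kron (U_R t) (U t))) $$ (i,j))
       / complex_of_real (2*pi))"

definition Phi :: "complex mat \<Rightarrow> complex mat \<Rightarrow> real" where
  "Phi \<eta> \<tau> = Inf {Re (mtrace X) | X. psd 2 X \<and> psd 4 (kron (1\<^sub>m 2) X - twirl (kron \<eta> \<tau>))}"

definition H :: "complex mat \<Rightarrow> complex mat \<Rightarrow> real" where
  "H \<eta> \<tau> = - log 2 (Phi \<eta> \<tau>)"

definition eta :: "real \<Rightarrow> real \<Rightarrow> real \<Rightarrow> complex mat" where
  "eta r \<theta> \<phi> = (1/2 :: complex) \<cdot>\<^sub>m (1\<^sub>m 2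
      + complex_of_real (r * sin \<theta> * cos \<phi>) \<cdot>\<^sub>m sigma_x
      + complex_of_real (r * sin \<theta> * sin \<phi>) \<cdot>\<^sub>m sigma_y
      + complex_of_real (r * cos \<theta>) \<cdot>\<^sub>m sigma_z)"

end

theory Submission
  imports Defs
begin

text \<open>
  Twirling kills all entries of the constraint matrix of \<open>Phi\<close> except its diagonal and the coherence
  between \<open>|00>\<close> and \<open>|11>\<close>, so \<open>Phi\<close> is the value of an explicit two-variable problem. Near the
  poles \<open>\<theta> = 0, pi\<close> of the Bloch sphere its optimum gives
  \<open>Phi (eta r \<theta> \<phi>) \<tau> = (1 + a cos \<theta>) / 2 + K sin\<^sup>2 \<theta> / cos \<theta>\<close>, where \<open>a = \<plusminus>r\<close> and \<open>K\<close> is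
  proportional to \<open>|c|\<^sup>2 / (1 - p)\<close> resp. \<open>|c|\<^sup>2 / p\<close> for the population \<open>p\<close> and coherence \<open>c\<close> of \<open>\<tau>\<close>.
  Hence both second derivatives, of \<open>\<Delta>Phi\<close> and of \<open>\<Delta>H\<close>, are positive multiples of the
  differences of these two coherence ratios. On the other side, the Choi matrix and covariance at
  \<open>t = pi/4\<close> show that a time-covariant qubit channel mixes the populations by a stochastic matrix
  \<open>[[a, 1 - b], [1 - a, b]]\<close> and multiplies the coherence by some \<open>\<gamma>\<close> with \<open>|\<gamma>|\<^sup>2 \<le> a b\<close>; all such maps
  are channels (Kraus form), and one of them maps \<open>\<rho>\<close> to \<open>\<sigma>\<close> iff neither ratio increases.
\<close>

section \<open>Positive semidefinite matrices\<close>

definition quad_form :: "nat \<Rightarrow> complex mat \<Rightarrow> (nat \<Rightarrow> complex) \<Rightarrow> complex" where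
  "quad_form n A x = (\<Sum>i<n. \<Sum>j<n. cnj (x i) * A $$ (i,j) * x j)"

lemma psd_iff_quad_form:
  "psd n A \<longleftrightarrow> A \<in> carrier_mat n n \<and> (\<forall>x. Im (quad_form n A x) = 0 \<and> 0 \<le> Re (quad_form n A x))"
  unfolding psd_def quad_form_def Let_def by simp

lemma sum_lessThan_single:
  fixes g :: "nat \<Rightarrow> 'a::comm_monoid_add"
  assumes "i < n" "\<And>k. k < n \<Longrightarrow> k \<noteq> i \<Longrightarrow> g k = 0"
  shows "(\<Sum>k<n. g k) = g i"
proof -
  have "(\<Sum>k<n. g k) = (\<Sum>k\<in>{i}. g k)"
    by (rule sum.mono_neutral_left[symmetric]) (use assms in auto)
  then show ?thesis by simp
qed

lemma sum_lessThan_pair: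
  fixes g :: "nat \<Rightarrow> 'a::comm_monoid_add"
  assumes "i < n" "j < n" "i \<noteq> j" "\<And>k. k < n \<Longrightarrow> k \<noteq> i \<Longrightarrow> k \<noteq> j \<Longrightarrow> g k = 0"
  shows "(\<Sum>k<n. g k) = g i + g j"
proof -
  have "(\<Sum>k<n. g k) = (\<Sum>k\<in>{i,j}. g k)"
    by (rule sum.mono_neutral_left[symmetric]) (use assms in auto)
  also have "\<dots> = g i + g j" using assms(3) by simp
  finally show ?thesis .
qed

lemma quad_form_single:
  assumes "i < n"
  shows "quad_form n A (\<lambda>k. if k = i then a else 0) = cnj a * A$$(i,i) * a"
proof -
  let ?x = "\<lambda>k. if k = i then a else 0"
  have row: "(\<Sum>l<n. cnj (?x k) * A $$ (k,l) * ?x l) = cnj (?x k) * A$$(k,i) * a" for k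
    by (subst sum_lessThan_single[OF assms]) auto
  show ?thesis unfolding quad_form_def row
    by (subst sum_lessThan_single[OF assms]) auto
qed

lemma quad_form_pair:
  assumes "i < n" "j < n" "i \<noteq> j"
  shows "quad_form n A (\<lambda>k. if k = i then a else if k = j then b else 0) =
    cnj a * A$$(i,i) * a + cnj a * A$$(i,j) * b + cnj b * A$$(j,i) * a + cnj b * A$$(j,j) * b"
proof -
  let ?x = "\<lambda>k. if k = i then a else if k = j then b else 0"
  have row: "(\<Sum>l<n. cnj (?x k) * A $$ (k,l) * ?x l) = cnj (?x k) * A$$(k,i) * a + cnj (?x k) * A$$(k,j) * b" for k
    by (subst sum_lessThan_pair[OF assms]) (use assms in auto)
  show ?thesis unfolding quad_form_def row
    by (subst sum_lessThan_pair[OF assms]) (use assms in \<open>auto simp: algebra_simps\<close>)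
qed

lemma psd_diag:
  assumes "psd n A" "i < n"
  shows psd_diag_real: "A$$(i,i) = of_real (Re (A$$(i,i)))"
    and psd_diag_nonneg: "0 \<le> Re (A$$(i,i))"
proof -
  have "Im (quad_form n A (\<lambda>k. if k = i then 1 else 0)) = 0 \<and> 0 \<le> Re (quad_form n A (\<lambda>k. if k = i then 1 else 0))"
    using assms(1) unfolding psd_iff_quad_form by blast
  then show "A$$(i,i) = of_real (Re (A$$(i,i)))" "0 \<le> Re (A$$(i,i))"
    unfolding quad_form_single[OF assms(2)] by (auto simp: complex_eq_iff)
qed

lemma psd_hermitian:
  assumes "psd n A" "i < n" "j < n"
  shows "A$$(j,i) = cnj (A$$(i,j))"
proof (cases "i = j")
  case True
  then show ?thesis using psd_diag_real[OF assms(1,2)] by (metis complex_cnj_complex_of_real)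
next
  case False
  have "Im (A$$(i,i)) = 0" "Im (A$$(j,j)) = 0"
    using psd_diag_real assms by (metis Im_complex_of_real)+
  moreover have "Im (quad_form n A (\<lambda>k. if k = i then 1 else if k = j then 1 else 0)) = 0"
    "Im (quad_form n A (\<lambda>k. if k = i then 1 else if k = j then \<i> else 0)) = 0"
    using assms(1) unfolding psd_iff_quad_form by blast+
  ultimately show ?thesis unfolding quad_form_pair[OF assms(2,3) False]
    by (auto simp: complex_eq_iff algebra_simps)
qed

lemma psd_principal_minor:
  assumes "psd n A" "i < n" "j < n" "i \<noteq> j"
  shows "cmod (A$$(i,j))^2 \<le> Re (A$$(i,i)) * Re (A$$(j,j))"
proof -
  define \<alpha> \<delta> \<beta> where "\<alpha> = Re (A$$(i,i))" and "\<delta> = Re (A$$(j,j))" and "\<beta> = A$$(i,j)"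
  have entries: "A$$(i,i) = of_real \<alpha>" "A$$(j,j) = of_real \<delta>" "A$$(j,i) = cnj \<beta>"
    unfolding \<alpha>_def \<delta>_def \<beta>_def using psd_diag_real psd_hermitian assms by blast+
  have "0 \<le> \<alpha>" "0 \<le> \<delta>" unfolding \<alpha>_def \<delta>_def using psd_diag_nonneg assms by auto
  have Q: "0 \<le> Re (cnj a * of_real \<alpha> * a + cnj a * \<beta> * b + cnj b * cnj \<beta> * a + cnj b * of_real \<delta> * b)" for a b
  proof -
    have "0 \<le> Re (quad_form n A (\<lambda>k. if k = i then a else if k = j then b else 0))"
      using assms(1) unfolding psd_iff_quad_form by blast
    then show ?thesis unfolding quad_form_pair[OF assms(2-4)] entries \<beta>_def .
  qed
  consider "0 < \<delta>" | "0 < \<alpha>" | "\<alpha> = 0" "\<delta> = 0" using \<open>0 \<le> \<alpha>\<close> \<open>0 \<le> \<delta>\<close> by linarith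
  then have "cmod \<beta>^2 \<le> \<alpha> * \<delta>"
  proof cases
    case 1
    from Q[of "of_real \<delta>" "- cnj \<beta>"] have "0 \<le> \<delta> * (\<alpha> * \<delta> - cmod \<beta>^2)"
      unfolding cmod_power2 by (simp add: algebra_simps power2_eq_square)
    with 1 show ?thesis by (simp add: zero_le_mult_iff)
  next
    case 2
    from Q[of "- \<beta>" "of_real \<alpha>"] have "0 \<le> \<alpha> * (\<alpha> * \<delta> - cmod \<beta>^2)"
      unfolding cmod_power2 by (simp add: algebra_simps power2_eq_square)
    with 2 show ?thesis by (simp add: zero_le_mult_iff)
  next
    case 3
    from Q[of 1 "- cnj \<beta>"] 3 have "0 \<le> - 2 * cmod \<beta>^2"
      unfolding cmod_power2 by (simp add: algebra_simps power2_eq_square)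
    with 3 show ?thesis by simp
  qed
  then show ?thesis unfolding \<alpha>_def \<delta>_def \<beta>_def .
qed

lemma cnj_mult_of_real_mult: "cnj z * of_real r * z = of_real (r * cmod z ^ 2)"
proof -
  have "cnj z * of_real r * z = of_real r * (z * cnj z)" by (simp add: mult_ac)
  then show ?thesis by (simp only: complex_norm_square[symmetric] of_real_mult)
qed

lemma two_norm_le_add_of_norm_square_le:
  fixes w :: complex
  assumes "0 \<le> P" "0 \<le> R" "cmod w ^ 2 \<le> P * R"
  shows "2 * cmod w \<le> P + R"
  using order_trans[OF real_le_rsqrt[OF assms(3)] arith_geo_mean_sqrt[OF assms(1,2)]] by simp

lemma quad_form_diagonal_plus_pair:
  assumes ij: "i < n" "j < n" "i \<noteq> j"
    and zero: "\<And>k l. k < n \<Longrightarrow> l < n \<Longrightarrow> k \<noteq> l \<Longrightarrow> (k,l) \<noteq> (i,j) \<Longrightarrow> (k,l) \<noteq> (j,i) \<Longrightarrow> M$$(k,l) = 0"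
    and diag: "\<And>k. k < n \<Longrightarrow> M$$(k,k) = of_real (d k)"
    and herm: "M$$(j,i) = cnj (M$$(i,j))"
  shows "quad_form n M x = of_real (\<Sum>k<n. d k * cmod (x k)^2)
    + (cnj (x i) * M$$(i,j) * x j + cnj (cnj (x i) * M$$(i,j) * x j))"
proof -
  define w where "w = cnj (x i) * M$$(i,j) * x j"
  have cnj_w: "cnj (x j) * M$$(j,i) * x i = cnj w" using herm by (simp add: w_def mult_ac)
  have row: "(\<Sum>l<n. cnj (x k) * M$$(k,l) * x l) = of_real (d k * cmod (x k)^2)
      + (if k = i then w else 0) + (if k = j then cnj w else 0)" if "k < n" for k
  proof -
    consider "k = i" | "k = j" | "k \<noteq> i" "k \<noteq> j" by blast
    then show ?thesis
    proof cases
      case 1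
      then show ?thesis using ij diag[OF \<open>k < n\<close>]
        by (subst sum_lessThan_pair[OF ij]) (auto simp: zero w_def cnj_mult_of_real_mult)
    next
      case 2
      then show ?thesis using ij diag[OF \<open>k < n\<close>]
        by (subst sum_lessThan_pair[of j n i]) (auto simp: zero cnj_w cnj_mult_of_real_mult)
    next
      case 3
      then show ?thesis using that diag[OF \<open>k < n\<close>]
        by (subst sum_lessThan_single[OF that]) (auto simp: zero cnj_mult_of_real_mult)
    qed
  qed
  show ?thesis unfolding quad_form_def w_def[symmetric] using ij by (simp add: row sum.distrib)
qed

lemma psd_diagonal_plus_pair:
  assumes M: "M \<in> carrier_mat n n" and ij: "i < n" "j < n" "i \<noteq> j"
    and zero: "\<And>k l. k < n \<Longrightarrow> l < n \<Longrightarrow> k \<noteq> l \<Longrightarrow> (k,l) \<noteq> (i,j) \<Longrightarrow> (k,l) \<noteq> (j,i) \<Longrightarrow> M$$(k,l) = 0"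
    and diag: "\<And>k. k < n \<Longrightarrow> M$$(k,k) = of_real (d k)" "\<And>k. k < n \<Longrightarrow> 0 \<le> d k"
    and herm: "M$$(j,i) = cnj (M$$(i,j))" and minor: "cmod (M$$(i,j))^2 \<le> d i * d j"
  shows "psd n M"
  unfolding psd_iff_quad_form
proof (intro conjI allI M)
  fix x
  define w where "w = cnj (x i) * M$$(i,j) * x j"
  have "cmod w ^ 2 = cmod (M$$(i,j))^2 * (cmod (x i)^2 * cmod (x j)^2)"
    by (simp add: w_def norm_mult power_mult_distrib mult_ac)
  also have "\<dots> \<le> (d i * d j) * (cmod (x i)^2 * cmod (x j)^2)"
    using minor by (intro mult_right_mono) auto
  finally have "cmod w ^ 2 \<le> (d i * cmod (x i)^2) * (d j * cmod (x j)^2)"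
    by (simp add: mult_ac)
  then have "2 * cmod w \<le> d i * cmod (x i)^2 + d j * cmod (x j)^2"
    by (intro two_norm_le_add_of_norm_square_le) (use diag(2) ij in auto)
  also have "\<dots> = (\<Sum>k\<in>{i,j}. d k * cmod (x k)^2)" using ij by simp
  also have "\<dots> \<le> (\<Sum>k<n. d k * cmod (x k)^2)"
    by (rule sum_mono2) (use ij diag(2) in auto)
  finally have "2 * cmod w \<le> (\<Sum>k<n. d k * cmod (x k)^2)" .
  moreover have "- cmod w \<le> Re w" using abs_Re_le_cmod[of w] by linarith
  moreover have "quad_form n M x = of_real (\<Sum>k<n. d k * cmod (x k)^2) + (w + cnj w)"
    unfolding w_def by (rule quad_form_diagonal_plus_pair[OF ij zero diag(1) herm])
  ultimately show "Im (quad_form n M x) = 0" "0 \<le> Re (quad_form n M x)" by simp_all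
qed

lemma mat_2_eqI:
  assumes "A \<in> carrier_mat 2 2" "B \<in> carrier_mat 2 2"
    "A $$ (0,0) = B $$ (0,0)" "A $$ (0,1) = B $$ (0,1)" "A $$ (1,0) = B $$ (1,0)" "A $$ (1,1) = B $$ (1,1)"
  shows "A = B"
proof (rule eq_matI)
  fix i j assume "i < dim_row B" "j < dim_col B"
  then have "i < 2" "j < 2" using assms(2) by auto
  then show "A $$ (i,j) = B $$ (i,j)" using assms(3-6) by (auto simp: less_2_cases_iff)
qed (use assms(1,2) in auto)

lemma mtrace_2: "X \<in> carrier_mat 2 2 \<Longrightarrow> mtrace X = X $$ (0,0) + X $$ (1,1)"
  unfolding mtrace_def by (simp add: numeral_2_eq_2)

section \<open>The twirl\<close>

lemma integral_exp_int_multiple: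
  fixes m :: int
  shows "integral {0..2*pi} (\<lambda>t::real. c * exp (\<i> * of_real (of_int m * t)))
    = (if m = 0 then c * of_real (2*pi) else 0)"
proof (cases "m = 0")
  case True
  then show ?thesis by (simp add: scaleR_conv_of_real mult_ac)
next
  case False
  define F where "F = (\<lambda>z::complex. exp (\<i> * of_int m * z) / (\<i> * of_int m))"
  have deriv: "((\<lambda>t::real. F (of_real t)) has_vector_derivative exp (\<i> * of_real (of_int m * t))) (at t within {0..2*pi})" for t
  proof -
    have "(F has_field_derivative exp (\<i> * of_int m * of_real t)) (at (of_real t))"
      unfolding F_def using False by (auto intro!: derivative_eq_intros)
    from has_vector_derivative_real_field[OF this] show ?thesis by (simp add: mult.assoc)
  qed
  have "((\<lambda>t. exp (\<i> * of_real (of_int m * t))) has_integral (F (of_real (2*pi)) - F (of_real 0))) {0..2*pi}"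
    by (rule fundamental_theorem_of_calculus) (use deriv in auto)
  moreover have "F (of_real (2*pi)) = F 0"
  proof -
    have "exp (\<i> * of_int m * of_real (2*pi)) = exp ((2 * of_int m * pi) * \<i>)"
      by (simp add: mult_ac)
    also have "\<dots> = 1" by (rule exp_integer_2pi) simp
    finally show ?thesis unfolding F_def by simp
  qed
  ultimately show ?thesis using False by (simp add: integral_unique)
qed

lemma kron_dims [simp]:
  "dim_row (kron A B) = dim_row A * dim_row B" "dim_col (kron A B) = dim_col A * dim_col B"
  unfolding kron_def by simp_all

lemma kron_index:
  "i < dim_row A * dim_row B \<Longrightarrow> j < dim_col A * dim_col B \<Longrightarrow>
   kron A B $$ (i,j) = A $$ (i div dim_row B, j div dim_col B) * B $$ (i mod dim_row B, j mod dim_col B)"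
  unfolding kron_def by simp

lemma madj_dims [simp]: "dim_row (madj A) = dim_col A" "dim_col (madj A) = dim_row A"
  unfolding madj_def by auto

lemma madj_index: "i < dim_col A \<Longrightarrow> j < dim_row A \<Longrightarrow> madj A $$ (i,j) = cnj (A $$ (j,i))"
  unfolding madj_def by auto

lemma madj_mat_diag: "madj (mat_diag n f) = mat_diag n (\<lambda>i. cnj (f i))"
  by (rule eq_matI) (auto simp: madj_index mat_diag_def)

lemma mat_diag_conj_index:
  assumes "M \<in> carrier_mat n n" "i < n" "j < n"
  shows "(mat_diag n f * M * madj (mat_diag n f)) $$ (i,j) = f i * M $$ (i,j) * cnj (f j)"
  using assms by (simp add: madj_mat_diag mat_diag_mult_left mat_diag_mult_right[of _ n n])

lemma mat_diag_conj_carrier: "M \<in> carrier_mat n n \<Longrightarrow> mat_diag n f * M * madj (mat_diag n f) \<in> carrier_mat n n"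
  by (simp add: madj_mat_diag mat_diag_mult_left mat_diag_mult_right[of _ n n])

definition U_phase :: "nat \<Rightarrow> real \<Rightarrow> complex" where
  "U_phase i t = (if i = 0 then exp (- \<i> * t) else exp (\<i> * t))"

lemma U_phase_cnj: "U_phase i t * cnj (U_phase i t) = 1"
  unfolding U_phase_def by (auto simp: exp_cnj exp_add[symmetric])

lemma U_eq_mat_diag: "U t = mat_diag 2 (\<lambda>i. U_phase i t)"
  by (rule eq_matI) (auto simp: U_def U_phase_def mat_diag_def mat_of_rows_list_def less_2_cases_iff)

lemma U_R_eq_mat_diag: "U_R t = mat_diag 2 (\<lambda>i. cnj (U_phase i t))"
  by (rule eq_matI) (auto simp: U_R_def U_phase_def mat_diag_def mat_of_rows_list_def less_2_cases_iff exp_cnj)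

lemma U_conj_index:
  assumes "X \<in> carrier_mat 2 2" "i < 2" "j < 2"
  shows "(U t * X * madj (U t)) $$ (i,j) = U_phase i t * X $$ (i,j) * cnj (U_phase j t)"
  unfolding U_eq_mat_diag by (rule mat_diag_conj_index[OF assms])

lemma U_conj_carrier: "X \<in> carrier_mat 2 2 \<Longrightarrow> U t * X * madj (U t) \<in> carrier_mat 2 2"
  unfolding U_eq_mat_diag by (rule mat_diag_conj_carrier)

definition charge :: "nat \<Rightarrow> int" where
  "charge i = (if i = 1 then 2 else if i = 2 then -2 else 0)"

lemma kron_U_R_U: "kron (U_R t) (U t) = mat_diag 4 (\<lambda>i. exp (\<i> * of_real (of_int (charge i) * t)))"
proof (rule eq_matI)
  fix i j assume "i < dim_row (mat_diag 4 (\<lambda>i. exp (\<i> * of_real (of_int (charge i) * t))))"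
    "j < dim_col (mat_diag 4 (\<lambda>i. exp (\<i> * of_real (of_int (charge i) * t))))"
  then have "i \<in> {0,1,2,3}" "j \<in> {0,1,2,3}" by (auto simp: mat_diag_def)
  then show "kron (U_R t) (U t) $$ (i,j) = mat_diag 4 (\<lambda>i. exp (\<i> * of_real (of_int (charge i) * t))) $$ (i,j)"
    unfolding U_R_eq_mat_diag U_eq_mat_diag
    by (auto simp: kron_index mat_diag_def U_phase_def charge_def exp_cnj exp_add[symmetric] algebra_simps)
qed (auto simp: U_eq_mat_diag U_R_eq_mat_diag mat_diag_def)

lemma twirl_carrier: "twirl K \<in> carrier_mat 4 4"
  unfolding twirl_def by simp

lemma twirl_index:
  assumes "K \<in> carrier_mat 4 4" "i < 4" "j < 4"
  shows "twirl K $$ (i,j) = (if charge i = charge j then K $$ (i,j) else 0)"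
proof -
  have conj: "(kron (U_R t) (U t) * K * madj (kron (U_R t) (U t))) $$ (i,j)
      = K $$ (i,j) * exp (\<i> * of_real (of_int (charge i - charge j) * t))" for t
  proof -
    have "cnj (exp (\<i> * of_real (of_int (charge j) * t))) = exp (- (\<i> * of_real (of_int (charge j) * t)))"
      by (simp add: exp_cnj)
    then show ?thesis unfolding kron_U_R_U mat_diag_conj_index[OF assms]
      by (simp add: exp_add[symmetric] algebra_simps)
  qed
  have "twirl K $$ (i,j) = integral {0..2*pi} (\<lambda>t. K $$ (i,j) * exp (\<i> * of_real (of_int (charge i - charge j) * t)))
      / complex_of_real (2*pi)"
    unfolding twirl_def by (simp only: index_mat[OF assms(2,3)] prod.case conj)
  then show ?thesis unfolding integral_exp_int_multiple by simp
qed

section \<open>Reduction of Phi to a two-variable problem\<close>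

definition Phi_constraint :: "complex mat \<Rightarrow> complex mat \<Rightarrow> complex mat \<Rightarrow> complex mat" where
  "Phi_constraint \<eta> \<tau> X = kron (1\<^sub>m 2) X - twirl (kron \<eta> \<tau>)"

lemma Phi_constraint_index:
  assumes "X \<in> carrier_mat 2 2" "\<eta> \<in> carrier_mat 2 2" "\<tau> \<in> carrier_mat 2 2" "i < 4" "j < 4"
  shows "Phi_constraint \<eta> \<tau> X $$ (i,j) =
    (if i div 2 = j div 2 then X $$ (i mod 2, j mod 2) else 0) -
    (if charge i = charge j then \<eta> $$ (i div 2, j div 2) * \<tau> $$ (i mod 2, j mod 2) else 0)"
proof -
  have "kron \<eta> \<tau> \<in> carrier_mat 4 4" using assms(2,3) by (intro carrier_matI) auto
  then have "twirl (kron \<eta> \<tau>) $$ (i,j) =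
      (if charge i = charge j then \<eta> $$ (i div 2, j div 2) * \<tau> $$ (i mod 2, j mod 2) else 0)"
    using assms by (simp add: twirl_index kron_index)
  moreover have "kron (1\<^sub>m 2) X $$ (i,j) = (if i div 2 = j div 2 then X $$ (i mod 2, j mod 2) else 0)"
    using assms by (simp add: kron_index)
  moreover have "i < dim_row (twirl (kron \<eta> \<tau>))" "j < dim_col (twirl (kron \<eta> \<tau>))"
    using twirl_carrier[of "kron \<eta> \<tau>"] assms(4,5) by auto
  ultimately show ?thesis unfolding Phi_constraint_def by simp
qed

lemma Phi_constraint_carrier: "Phi_constraint \<eta> \<tau> X \<in> carrier_mat 4 4"
  unfolding Phi_constraint_def by (rule minus_carrier_mat[OF twirl_carrier])

text \<open>\<open>(x, y)\<close> is the diagonal of \<open>X\<close>: the twirled constraint matrix is diagonal up to the entry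
  coupling \<open>|00>\<close> and \<open>|11>\<close>, whence four diagonal conditions and one \<open>2 \<times> 2\<close> determinant.\<close>
definition Phi_feasible :: "real \<Rightarrow> real \<Rightarrow> real \<Rightarrow> real \<Rightarrow> real \<Rightarrow> real \<Rightarrow> bool" where
  "Phi_feasible e0 e1 p k x y \<longleftrightarrow> e0 * p \<le> x \<and> e1 * p \<le> x \<and> e0 * (1 - p) \<le> y \<and> e1 * (1 - p) \<le> y
     \<and> k \<le> (x - e0 * p) * (y - e1 * (1 - p))"

definition Phi_reduced :: "real \<Rightarrow> real \<Rightarrow> real \<Rightarrow> real \<Rightarrow> real" where
  "Phi_reduced e0 e1 p k = Inf {x + y | x y. Phi_feasible e0 e1 p k x y}"

lemma real_div_le_add_of_le_mult_add:
  fixes s u d k :: real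
  assumes "0 \<le> s" "0 \<le> u" "0 \<le> d" "k \<le> s * (u + d)" "k \<le> d^2"
  shows "k / d \<le> s + u"
proof (cases "d = 0")
  case True
  then show ?thesis using assms by simp
next
  case False
  have "k \<le> d * (s + u)"
  proof (cases "s \<le> d")
    case True
    have "s * u \<le> d * u" using True assms(2) by (rule mult_right_mono)
    then show ?thesis using assms(4) by (simp add: algebra_simps)
  next
    case False
    have "d * d \<le> d * s" using False assms(3) by (intro mult_left_mono) auto
    moreover have "0 \<le> d * u" using assms by simp
    ultimately show ?thesis using assms(5) by (simp add: power2_eq_square algebra_simps)
  qed
  then show ?thesis using False assms(3) by (simp add: divide_le_eq mult.commute)
qed

lemma Phi_reduced_eq:
  assumes "e1 \<le> e0" "0 \<le> p" "p \<le> 1" "0 \<le> k" "k \<le> ((e0 - e1) * (1 - p))^2"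
  shows "Phi_reduced e0 e1 p k = e0 + k / ((e0 - e1) * (1 - p))"
proof -
  define d where "d = (e0 - e1) * (1 - p)"
  have "0 \<le> d" using assms unfolding d_def by simp
  let ?T = "{x + y | x y. Phi_feasible e0 e1 p k x y}"
  have "e0 + k / d \<in> ?T"
  proof -
    have "e1 * p \<le> e0 * p" "e1 * (1 - p) \<le> e0 * (1 - p)"
      using assms by (auto intro: mult_right_mono)
    moreover have "0 \<le> k / d" using assms \<open>0 \<le> d\<close> by simp
    moreover have "k \<le> k / d * (e0 * (1 - p) - e1 * (1 - p))"
    proof -
      have "k \<le> d^2" "e0 * (1 - p) - e1 * (1 - p) = d" using assms(5) by (simp_all add: d_def algebra_simps)
      then show ?thesis using assms(4) by (cases "d = 0") auto
    qed
    ultimately have "e0 * p + k / d + e0 * (1 - p) \<in> ?T" unfolding Phi_feasible_def by fastforce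
    then show ?thesis by (simp add: algebra_simps)
  qed
  moreover have "e0 + k / d \<le> v" if "v \<in> ?T" for v
  proof -
    obtain x y where v: "v = x + y" and "e0 * p \<le> x" "e0 * (1 - p) \<le> y"
      and k: "k \<le> (x - e0 * p) * (y - e1 * (1 - p))"
      using \<open>v \<in> ?T\<close> unfolding Phi_feasible_def by blast
    have "k \<le> (x - e0 * p) * ((y - e0 * (1 - p)) + d)"
      using k unfolding d_def by (simp add: algebra_simps)
    then have "k / d \<le> (x - e0 * p) + (y - e0 * (1 - p))"
      using assms \<open>e0 * p \<le> x\<close> \<open>e0 * (1 - p) \<le> y\<close> \<open>0 \<le> d\<close>
      by (intro real_div_le_add_of_le_mult_add) (auto simp: d_def)
    then show ?thesis unfolding v by (simp add: algebra_simps)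
  qed
  ultimately show ?thesis unfolding Phi_reduced_def d_def[symmetric] by (rule cInf_eq_minimum)
qed

lemma Phi_feasible_swap: "Phi_feasible e1 e0 (1 - p) k y x \<longleftrightarrow> Phi_feasible e0 e1 p k x y"
  unfolding Phi_feasible_def by (auto simp: ac_simps)

lemma Phi_reduced_swap: "Phi_reduced e0 e1 p k = Phi_reduced e1 e0 (1 - p) k"
  unfolding Phi_reduced_def by (rule arg_cong[where f = Inf]) (use Phi_feasible_swap in \<open>fastforce simp: add.commute\<close>)

locale Phi_data =
  fixes \<eta> \<tau> :: "complex mat" and e0 e1 p :: real
  assumes \<eta>: "\<eta> \<in> carrier_mat 2 2" "\<eta> $$ (0,0) = of_real e0" "\<eta> $$ (1,1) = of_real e1"
      "\<eta> $$ (1,0) = cnj (\<eta> $$ (0,1))"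
    and \<tau>: "\<tau> \<in> carrier_mat 2 2" "\<tau> $$ (0,0) = of_real p" "\<tau> $$ (1,1) = of_real (1 - p)"
      "\<tau> $$ (1,0) = cnj (\<tau> $$ (0,1))"
    and nonneg: "0 \<le> e0" "0 \<le> e1" "0 \<le> p" "p \<le> 1"
begin

lemma Phi_constraint_entries:
  assumes "X \<in> carrier_mat 2 2"
  shows "Phi_constraint \<eta> \<tau> X $$ (0,0) = X $$ (0,0) - of_real (e0 * p)"
    "Phi_constraint \<eta> \<tau> X $$ (1,1) = X $$ (1,1) - of_real (e0 * (1 - p))"
    "Phi_constraint \<eta> \<tau> X $$ (2,2) = X $$ (0,0) - of_real (e1 * p)"
    "Phi_constraint \<eta> \<tau> X $$ (3,3) = X $$ (1,1) - of_real (e1 * (1 - p))"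
    "Phi_constraint \<eta> \<tau> X $$ (0,3) = - (\<eta> $$ (0,1) * \<tau> $$ (0,1))"
    "Phi_constraint \<eta> \<tau> X $$ (3,0) = cnj (- (\<eta> $$ (0,1) * \<tau> $$ (0,1)))"
  using Phi_constraint_index[OF assms \<eta>(1) \<tau>(1)] \<eta> \<tau> by (simp_all add: charge_def)

lemma Phi_feasible_of_constraint:
  assumes "psd 2 X" and psd: "psd 4 (Phi_constraint \<eta> \<tau> X)"
  shows "Phi_feasible e0 e1 p (cmod (\<eta> $$ (0,1) * \<tau> $$ (0,1))^2) (Re (X $$ (0,0))) (Re (X $$ (1,1)))"
proof -
  have X: "X \<in> carrier_mat 2 2" using assms(1) by (simp add: psd_def)
  show ?thesis
    using psd_diag_nonneg[OF psd, of 0] psd_diag_nonneg[OF psd, of 1] psd_diag_nonneg[OF psd, of 2]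
      psd_diag_nonneg[OF psd, of 3] psd_principal_minor[OF psd, of 0 3]
    unfolding Phi_feasible_def Phi_constraint_entries[OF X] by simp
qed

lemma psd_constraint_of_Phi_feasible:
  assumes feasible: "Phi_feasible e0 e1 p (cmod (\<eta> $$ (0,1) * \<tau> $$ (0,1))^2) x y"
  defines "X \<equiv> mat_diag 2 (\<lambda>i. complex_of_real (if i = 0 then x else y))"
  shows "psd 2 X" and "psd 4 (Phi_constraint \<eta> \<tau> X)"
proof -
  have X: "X \<in> carrier_mat 2 2" "X $$ (0,0) = of_real x" "X $$ (1,1) = of_real y" "X $$ (0,1) = 0" "X $$ (1,0) = 0"
    unfolding X_def by (simp_all add: mat_diag_def)
  have "0 \<le> e0 * p" "0 \<le> e0 * (1 - p)" using nonneg by simp_all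
  then have "0 \<le> x" "0 \<le> y" using feasible unfolding Phi_feasible_def by linarith+
  then show "psd 2 X"
    using X by (intro psd_diagonal_plus_pair[where i = 0 and j = 1 and d = "\<lambda>i. if i = 0 then x else y"])
      (auto simp: less_2_cases_iff)
  define d where "d i = (if i = 0 then x - e0 * p else if i = 1 then y - e0 * (1 - p)
    else if i = 2 then x - e1 * p else y - e1 * (1 - p))" for i :: nat
  note D = Phi_constraint_entries[OF X(1)]
  show "psd 4 (Phi_constraint \<eta> \<tau> X)"
  proof (rule psd_diagonal_plus_pair[where i = 0 and j = 3 and d = d])
    show "Phi_constraint \<eta> \<tau> X $$ (k, l) = 0"
      if "k < 4" "l < 4" "k \<noteq> l" "(k, l) \<noteq> (0, 3)" "(k, l) \<noteq> (3, 0)" for k l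
    proof -
      have kl: "k \<in> {0,1,2,3}" "l \<in> {0,1,2,3}" using that(1,2) by auto
      then have "charge k \<noteq> charge l" using that(3-5) by (auto simp: charge_def)
      moreover have "X $$ (k mod 2, l mod 2) = 0" if "k div 2 = l div 2"
        using kl that \<open>k \<noteq> l\<close> X by auto
      ultimately show ?thesis using Phi_constraint_index[OF X(1) \<eta>(1) \<tau>(1) that(1,2)] by simp
    qed
    show "Phi_constraint \<eta> \<tau> X $$ (k, k) = of_real (d k)" if "k < 4" for k
    proof -
      have "k \<in> {0,1,2,3}" using that by auto
      then show ?thesis using D X by (auto simp: d_def)
    qed
    show "0 \<le> d k" for k
      using feasible unfolding Phi_feasible_def d_def by simp
    show "cmod (Phi_constraint \<eta> \<tau> X $$ (0, 3))^2 \<le> d 0 * d 3"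
      using feasible unfolding Phi_feasible_def D d_def by simp
  qed (simp_all add: Phi_constraint_carrier D)
qed

lemma Phi_eq_Phi_reduced: "Phi \<eta> \<tau> = Phi_reduced e0 e1 p (cmod (\<eta> $$ (0,1) * \<tau> $$ (0,1))^2)"
proof -
  let ?k = "cmod (\<eta> $$ (0,1) * \<tau> $$ (0,1))^2"
  have "{Re (mtrace X) | X. psd 2 X \<and> psd 4 (Phi_constraint \<eta> \<tau> X)} = {x + y | x y. Phi_feasible e0 e1 p ?k x y}"
  proof (intro equalityI subsetI)
    fix v assume "v \<in> {Re (mtrace X) | X. psd 2 X \<and> psd 4 (Phi_constraint \<eta> \<tau> X)}"
    then obtain X where "v = Re (mtrace X)" "psd 2 X" "psd 4 (Phi_constraint \<eta> \<tau> X)" by blast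
    moreover from this have "X \<in> carrier_mat 2 2" by (simp add: psd_def)
    ultimately show "v \<in> {x + y | x y. Phi_feasible e0 e1 p ?k x y}"
      using Phi_feasible_of_constraint by (force simp: mtrace_2)
  next
    fix v assume "v \<in> {x + y | x y. Phi_feasible e0 e1 p ?k x y}"
    then obtain x y where v: "v = x + y" and feasible: "Phi_feasible e0 e1 p ?k x y" by blast
    let ?X = "mat_diag 2 (\<lambda>i. complex_of_real (if i = 0 then x else y))"
    have "Re (mtrace ?X) = v" unfolding v by (simp add: mtrace_2 mat_diag_def)
    then show "v \<in> {Re (mtrace X) | X. psd 2 X \<and> psd 4 (Phi_constraint \<eta> \<tau> X)}"
      using psd_constraint_of_Phi_feasible[OF feasible] by blast
  qed
  then show ?thesis unfolding Phi_def Phi_reduced_def Phi_constraint_def[symmetric] by simp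
qed

end

section \<open>Phi near the poles of the Bloch sphere\<close>

definition pop0 :: "complex mat \<Rightarrow> real" where
  "pop0 \<tau> = Re (\<tau> $$ (0,0))"

definition coh :: "complex mat \<Rightarrow> complex" where
  "coh \<tau> = \<tau> $$ (0,1)"

text \<open>At \<open>pop0 \<tau> \<in> {0, 1}\<close> the coherence vanishes, and the ratio is \<open>0\<close> by \<open>x / 0 = 0\<close>.\<close>
definition coherence_over_pop0 :: "complex mat \<Rightarrow> real" where
  "coherence_over_pop0 \<tau> = cmod (coh \<tau>)^2 / pop0 \<tau>"

definition coherence_over_pop1 :: "complex mat \<Rightarrow> real" where
  "coherence_over_pop1 \<tau> = cmod (coh \<tau>)^2 / (1 - pop0 \<tau>)"

lemma qubit_state_entries:
  assumes "qubit_state \<tau>"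
  shows "\<tau> \<in> carrier_mat 2 2" "\<tau> $$ (0,0) = of_real (pop0 \<tau>)" "\<tau> $$ (1,1) = of_real (1 - pop0 \<tau>)"
    "\<tau> $$ (1,0) = cnj (coh \<tau>)" "0 \<le> pop0 \<tau>" "pop0 \<tau> \<le> 1"
    "cmod (coh \<tau>)^2 \<le> pop0 \<tau> * (1 - pop0 \<tau>)"
proof -
  have psd: "psd 2 \<tau>" and tr: "mtrace \<tau> = 1" using assms unfolding qubit_state_def by auto
  show \<tau>: "\<tau> \<in> carrier_mat 2 2" using psd unfolding psd_def by simp
  have diag: "\<tau> $$ (0,0) = of_real (Re (\<tau> $$ (0,0)))" "\<tau> $$ (1,1) = of_real (Re (\<tau> $$ (1,1)))"
    "0 \<le> Re (\<tau> $$ (0,0))" "0 \<le> Re (\<tau> $$ (1,1))"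
    using psd_diag_real[OF psd] psd_diag_nonneg[OF psd] by auto
  have re11: "Re (\<tau> $$ (1,1)) = 1 - pop0 \<tau>"
    using tr unfolding mtrace_2[OF \<tau>] pop0_def by (simp add: complex_eq_iff)
  show "\<tau> $$ (0,0) = of_real (pop0 \<tau>)" "\<tau> $$ (1,1) = of_real (1 - pop0 \<tau>)" "0 \<le> pop0 \<tau>" "pop0 \<tau> \<le> 1"
    using diag re11 unfolding pop0_def by simp_all
  show "cmod (coh \<tau>)^2 \<le> pop0 \<tau> * (1 - pop0 \<tau>)"
    using psd_principal_minor[OF psd, of 0 1] re11 unfolding pop0_def coh_def by simp
  show "\<tau> $$ (1,0) = cnj (coh \<tau>)" unfolding coh_def using psd_hermitian[OF psd, of 0 1] by simp
qed

lemma eta_entries: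
  "eta r \<theta> \<phi> \<in> carrier_mat 2 2"
  "eta r \<theta> \<phi> $$ (0,0) = of_real ((1 + r * cos \<theta>) / 2)"
  "eta r \<theta> \<phi> $$ (1,1) = of_real ((1 - r * cos \<theta>) / 2)"
  "eta r \<theta> \<phi> $$ (1,0) = cnj (eta r \<theta> \<phi> $$ (0,1))"
  "cmod (eta r \<theta> \<phi> $$ (0,1))^2 = (r * sin \<theta>)^2 / 4"
proof -
  have entries: "eta r \<theta> \<phi> $$ (0,1) = (of_real (r * sin \<theta> * cos \<phi>) - \<i> * of_real (r * sin \<theta> * sin \<phi>)) / 2"
    "eta r \<theta> \<phi> $$ (1,0) = (of_real (r * sin \<theta> * cos \<phi>) + \<i> * of_real (r * sin \<theta> * sin \<phi>)) / 2"
    unfolding eta_def sigma_x_def sigma_y_def sigma_z_def mat_of_rows_list_def by (auto simp: complex_eq_iff)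
  show "eta r \<theta> \<phi> \<in> carrier_mat 2 2"
    "eta r \<theta> \<phi> $$ (0,0) = of_real ((1 + r * cos \<theta>) / 2)"
    "eta r \<theta> \<phi> $$ (1,1) = of_real ((1 - r * cos \<theta>) / 2)"
    unfolding eta_def sigma_x_def sigma_y_def sigma_z_def mat_of_rows_list_def by (auto simp: complex_eq_iff)
  show "eta r \<theta> \<phi> $$ (1,0) = cnj (eta r \<theta> \<phi> $$ (0,1))" unfolding entries by (simp add: complex_eq_iff)
  show "cmod (eta r \<theta> \<phi> $$ (0,1))^2 = (r * sin \<theta>)^2 / 4"
    unfolding entries cmod_power2 by (simp add: field_simps cos_squared_eq)
qed

lemma Phi_eta:
  assumes "qubit_state \<tau>" "\<bar>r\<bar> \<le> 1"
  shows "Phi (eta r \<theta> \<phi>) \<tau> =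
    Phi_reduced ((1 + r * cos \<theta>) / 2) ((1 - r * cos \<theta>) / 2) (pop0 \<tau>) ((r * sin \<theta>)^2 / 4 * cmod (coh \<tau>)^2)"
proof -
  note \<tau> = qubit_state_entries[OF assms(1)]
  have "\<bar>r * cos \<theta>\<bar> \<le> 1"
    using assms(2) abs_cos_le_one[of \<theta>] by (simp add: abs_mult mult_le_one)
  then have "0 \<le> (1 + r * cos \<theta>) / 2" "0 \<le> (1 - r * cos \<theta>) / 2" by auto
  then have "Phi (eta r \<theta> \<phi>) \<tau> = Phi_reduced ((1 + r * cos \<theta>) / 2) ((1 - r * cos \<theta>) / 2) (pop0 \<tau>)
      (cmod (eta r \<theta> \<phi> $$ (0,1) * \<tau> $$ (0,1))^2)"
    using \<tau> by (intro Phi_data.Phi_eq_Phi_reduced Phi_data.intro eta_entries) (simp_all add: coh_def)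
  also have "cmod (eta r \<theta> \<phi> $$ (0,1) * \<tau> $$ (0,1))^2 = (r * sin \<theta>)^2 / 4 * cmod (coh \<tau>)^2"
    unfolding norm_mult power_mult_distrib eta_entries(5) coh_def ..
  finally show ?thesis .
qed

text \<open>With \<open>a = r\<close> near \<open>\<theta> = 0\<close> and \<open>a = -r\<close> near \<open>\<theta> = pi\<close>, this is \<open>Phi (eta r \<theta> \<phi>) \<tau>\<close>.\<close>
definition Phi_profile :: "real \<Rightarrow> real \<Rightarrow> real \<Rightarrow> real" where
  "Phi_profile a K \<theta> = (1 + a * cos \<theta>) / 2 + K * sin \<theta>^2 / cos \<theta>"

lemma Phi_reduced_at_pole:
  assumes p: "0 \<le> p" "p \<le> 1" and C: "0 \<le> C" "C \<le> p * (1 - p)" and pos: "0 < a * cos \<theta>"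
    and near: "p = 1 \<or> sin \<theta>^2 \<le> 4 * cos \<theta>^2 * (1 - p)"
  shows "Phi_reduced ((1 + a * cos \<theta>) / 2) ((1 - a * cos \<theta>) / 2) p ((a * sin \<theta>)^2 / 4 * C)
    = Phi_profile a (a * C / (4 * (1 - p))) \<theta>"
proof (cases "p = 1")
  case True
  with C have "C = 0" by simp
  with True pos show ?thesis by (subst Phi_reduced_eq) (auto simp: Phi_profile_def)
next
  case False
  have gap: "(1 + a * cos \<theta>) / 2 - (1 - a * cos \<theta>) / 2 = a * cos \<theta>" by (simp add: field_simps)
  have "C \<le> 1 - p" using C(2) p mult_right_mono[of p 1 "1 - p"] by simp
  then have "(a * sin \<theta>)^2 / 4 * C \<le> (a * sin \<theta>)^2 / 4 * (1 - p)" by (intro mult_left_mono) auto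
  also have "\<dots> = a^2 * (1 - p) * (sin \<theta>^2 / 4)" by (simp add: power_mult_distrib)
  also have "\<dots> \<le> a^2 * (1 - p) * (cos \<theta>^2 * (1 - p))"
    using near False p by (intro mult_left_mono) auto
  also have "\<dots> = (a * cos \<theta> * (1 - p))^2" by (simp add: power_mult_distrib power2_eq_square)
  finally have bound: "(a * sin \<theta>)^2 / 4 * C \<le> (a * cos \<theta> * (1 - p))^2" .
  have "Phi_reduced ((1 + a * cos \<theta>) / 2) ((1 - a * cos \<theta>) / 2) p ((a * sin \<theta>)^2 / 4 * C)
      = (1 + a * cos \<theta>) / 2 + (a * sin \<theta>)^2 / 4 * C / (((1 + a * cos \<theta>) / 2 - (1 - a * cos \<theta>) / 2) * (1 - p))"
    by (rule Phi_reduced_eq) (use pos p C bound in \<open>simp_all only: gap\<close>, auto)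
  also have "\<dots> = Phi_profile a (a * C / (4 * (1 - p))) \<theta>"
  proof -
    have "a \<noteq> 0" "cos \<theta> \<noteq> 0" "1 - p \<noteq> 0" using pos False by auto
    then show ?thesis unfolding gap Phi_profile_def by (simp add: field_simps power2_eq_square)
  qed
  finally show ?thesis .
qed

lemma eventually_nhds_pos: "isCont f x \<Longrightarrow> 0 < f x \<Longrightarrow> eventually (\<lambda>y. 0 < (f y :: real)) (nhds x)"
  by (rule order_tendstoD(1)[OF isCont_tendsto_compose[OF _ filterlim_ident]])

lemma eventually_pole_condition:
  fixes \<zeta> a p :: real
  assumes "sin \<zeta> = 0" "0 < a * cos \<zeta>" "p \<le> 1"
  shows "eventually (\<lambda>\<theta>. 0 < a * cos \<theta> \<and> (p = 1 \<or> sin \<theta>^2 \<le> 4 * cos \<theta>^2 * (1 - p))) (nhds \<zeta>)"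
proof -
  have "eventually (\<lambda>\<theta>. 0 < a * cos \<theta>) (nhds \<zeta>)"
    using assms(2) by (intro eventually_nhds_pos continuous_intros)
  moreover have "eventually (\<lambda>\<theta>. p = 1 \<or> sin \<theta>^2 \<le> 4 * cos \<theta>^2 * (1 - p)) (nhds \<zeta>)"
  proof (cases "p = 1")
    case False
    then have "p < 1" using assms(3) by simp
    moreover have "cos \<zeta>^2 = 1" using assms(1) sin_cos_squared_add[of \<zeta>] by simp
    ultimately have "0 < 4 * cos \<zeta>^2 * (1 - p) - sin \<zeta>^2" using assms(1) by simp
    then have "eventually (\<lambda>\<theta>. 0 < 4 * cos \<theta>^2 * (1 - p) - sin \<theta>^2) (nhds \<zeta>)"
      by (intro eventually_nhds_pos continuous_intros)
    then show ?thesis by (rule eventually_mono) auto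
  qed simp
  ultimately show ?thesis by eventually_elim simp
qed

lemma Phi_eta_near_0:
  assumes "qubit_state \<tau>" "0 < r" "r \<le> 1"
  shows "eventually (\<lambda>\<theta>. Phi (eta r \<theta> \<phi>) \<tau> = Phi_profile r (r * coherence_over_pop1 \<tau> / 4) \<theta>) (nhds 0)"
proof -
  note \<tau> = qubit_state_entries[OF assms(1)]
  have "eventually (\<lambda>\<theta>. 0 < r * cos \<theta> \<and> (pop0 \<tau> = 1 \<or> sin \<theta>^2 \<le> 4 * cos \<theta>^2 * (1 - pop0 \<tau>))) (nhds 0)"
    using assms \<tau> by (intro eventually_pole_condition) auto
  then show ?thesis
  proof eventually_elim
    case (elim \<theta>)
    have "\<bar>r\<bar> \<le> 1" using assms by simp
    with elim \<tau> have "Phi (eta r \<theta> \<phi>) \<tau> = Phi_profile r (r * cmod (coh \<tau>)^2 / (4 * (1 - pop0 \<tau>))) \<theta>"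
      unfolding Phi_eta[OF assms(1) \<open>\<bar>r\<bar> \<le> 1\<close>] by (intro Phi_reduced_at_pole) auto
    then show ?case by (simp add: coherence_over_pop1_def ac_simps)
  qed
qed

lemma Phi_eta_near_pi:
  assumes "qubit_state \<tau>" "0 < r" "r \<le> 1"
  shows "eventually (\<lambda>\<theta>. Phi (eta r \<theta> \<phi>) \<tau> = Phi_profile (- r) (- (r * coherence_over_pop0 \<tau> / 4)) \<theta>) (nhds pi)"
proof -
  note \<tau> = qubit_state_entries[OF assms(1)]
  have "eventually (\<lambda>\<theta>. 0 < - r * cos \<theta> \<and> (1 - pop0 \<tau> = 1 \<or> sin \<theta>^2 \<le> 4 * cos \<theta>^2 * (1 - (1 - pop0 \<tau>)))) (nhds pi)"
    using assms \<tau> by (intro eventually_pole_condition) auto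
  then show ?thesis
  proof eventually_elim
    case (elim \<theta>)
    have "\<bar>r\<bar> \<le> 1" using assms by simp
    then have "Phi (eta r \<theta> \<phi>) \<tau> = Phi_reduced ((1 + - r * cos \<theta>) / 2) ((1 - - r * cos \<theta>) / 2) (1 - pop0 \<tau>)
        ((- r * sin \<theta>)^2 / 4 * cmod (coh \<tau>)^2)"
      unfolding Phi_eta[OF assms(1) \<open>\<bar>r\<bar> \<le> 1\<close>] by (subst Phi_reduced_swap) simp
    also have "\<dots> = Phi_profile (- r) (- r * cmod (coh \<tau>)^2 / (4 * (1 - (1 - pop0 \<tau>)))) \<theta>"
      using elim \<tau> by (intro Phi_reduced_at_pole) (auto simp: mult.commute)
    finally show ?case by (simp add: coherence_over_pop0_def ac_simps)
  qed
qed

section \<open>Second derivatives at the poles\<close>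

text \<open>\<open>deriv (deriv f) x\<close> is meaningless unless \<open>f\<close> is differentiable near \<open>x\<close>; this predicate
  carries the first derivative as a witness.\<close>
definition has_second_derivative_at :: "(real \<Rightarrow> real) \<Rightarrow> real \<Rightarrow> real \<Rightarrow> bool" where
  "has_second_derivative_at f v x \<longleftrightarrow>
     (\<exists>f'. eventually (\<lambda>y. (f has_real_derivative f' y) (at y)) (nhds x) \<and> (f' has_real_derivative v) (at x))"

lemma deriv_deriv_eq_of_has_second_derivative_at:
  assumes "has_second_derivative_at f v x"
  shows "deriv (deriv f) x = v"
proof -
  obtain f' where ev: "eventually (\<lambda>y. (f has_real_derivative f' y) (at y)) (nhds x)"
    and f': "(f' has_real_derivative v) (at x)"
    using assms unfolding has_second_derivative_at_def by blast
  from ev have "eventually (\<lambda>y. deriv f y = f' y) (nhds x)"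
    by eventually_elim (rule DERIV_imp_deriv)
  then have "deriv (deriv f) x = deriv f' x" by (rule deriv_cong_ev) simp
  also have "\<dots> = v" using f' by (rule DERIV_imp_deriv)
  finally show ?thesis .
qed

lemma has_second_derivative_at_cong:
  assumes "eventually (\<lambda>y. f y = g y) (nhds x)" "has_second_derivative_at g v x"
  shows "has_second_derivative_at f v x"
proof -
  obtain g' where ev: "eventually (\<lambda>y. (g has_real_derivative g' y) (at y)) (nhds x)"
    and g': "(g' has_real_derivative v) (at x)"
    using assms(2) unfolding has_second_derivative_at_def by blast
  have "eventually (\<lambda>y. eventually (\<lambda>z. f z = g z) (nhds y)) (nhds x)"
    using assms(1) by (simp add: eventually_eventually)
  with ev have "eventually (\<lambda>y. (f has_real_derivative g' y) (at y)) (nhds x)"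
    by eventually_elim (simp add: DERIV_cong_ev)
  with g' show ?thesis unfolding has_second_derivative_at_def by blast
qed

lemma has_second_derivative_at_diff:
  assumes "has_second_derivative_at f v x" "has_second_derivative_at g w x"
  shows "has_second_derivative_at (\<lambda>y. f y - g y) (v - w) x"
proof -
  obtain f' g' where ev: "eventually (\<lambda>y. (f has_real_derivative f' y) (at y)) (nhds x)"
      "eventually (\<lambda>y. (g has_real_derivative g' y) (at y)) (nhds x)"
    and d: "(f' has_real_derivative v) (at x)" "(g' has_real_derivative w) (at x)"
    using assms unfolding has_second_derivative_at_def by blast
  from ev have "eventually (\<lambda>y. ((\<lambda>y. f y - g y) has_real_derivative f' y - g' y) (at y)) (nhds x)"
    by eventually_elim (rule DERIV_diff)
  moreover have "((\<lambda>y. f' y - g' y) has_real_derivative v - w) (at x)" using d by (rule DERIV_diff)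
  ultimately show ?thesis
    unfolding has_second_derivative_at_def by (intro exI[of _ "\<lambda>y. f' y - g' y"] conjI)
qed

lemma has_second_derivative_at_log:
  assumes f2: "has_second_derivative_at f v x" and f1: "(f has_real_derivative 0) (at x)"
    and pos: "0 < f x" and b: "0 < b" "b \<noteq> 1"
  shows "has_second_derivative_at (\<lambda>y. log b (f y)) (v / (f x * ln b)) x"
proof -
  obtain f' where ev: "eventually (\<lambda>y. (f has_real_derivative f' y) (at y)) (nhds x)"
    and f': "(f' has_real_derivative v) (at x)"
    using f2 unfolding has_second_derivative_at_def by blast
  have "f' x = 0" using DERIV_unique[OF eventually_nhds_x_imp_x[OF ev] f1] .
  have "ln b \<noteq> 0" using b by simp
  have "eventually (\<lambda>y. 0 < f y) (nhds x)" using DERIV_isCont[OF f1] pos by (rule eventually_nhds_pos)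
  with ev have "eventually (\<lambda>y. ((\<lambda>y. log b (f y)) has_real_derivative f' y / (f y * ln b)) (at y)) (nhds x)"
  proof eventually_elim
    case (elim y)
    with \<open>ln b \<noteq> 0\<close> have "((\<lambda>y. ln (f y) / ln b) has_real_derivative f' y / f y / ln b) (at y)"
      by (auto intro!: derivative_eq_intros)
    then show ?case by (simp add: log_def)
  qed
  moreover have "((\<lambda>y. f' y / (f y * ln b)) has_real_derivative v / (f x * ln b)) (at x)"
  proof -
    have "((\<lambda>y. f' y / (f y * ln b)) has_real_derivative
        (v * (f x * ln b) - f' x * (0 * ln b)) / (f x * ln b * (f x * ln b))) (at x)"
      using f' f1 pos \<open>ln b \<noteq> 0\<close> by (auto intro!: derivative_eq_intros)
    then show ?thesis using pos \<open>ln b \<noteq> 0\<close> by simp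
  qed
  ultimately show ?thesis
    unfolding has_second_derivative_at_def by (intro exI[of _ "\<lambda>y. f' y / (f y * ln b)"] conjI)
qed

lemma Phi_profile_derivatives:
  fixes \<zeta> :: real
  assumes "sin \<zeta> = 0"
  shows "has_second_derivative_at (Phi_profile a K) ((2 * K - a / 2) * cos \<zeta>) \<zeta>"
    and "(Phi_profile a K has_real_derivative 0) (at \<zeta>)"
    and "Phi_profile a K \<zeta> = (1 + a * cos \<zeta>) / 2"
proof -
  define f' where "f' \<theta> = - a * sin \<theta> / 2 + K * (2 * sin \<theta> + sin \<theta>^3 / cos \<theta>^2)" for \<theta>
  have d1: "(Phi_profile a K has_real_derivative f' \<theta>) (at \<theta>)" if "cos \<theta> \<noteq> 0" for \<theta>
  proof -
    have "(Phi_profile a K has_real_derivative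
        a * - sin \<theta> / 2 + K * (2 * sin \<theta> * cos \<theta> * cos \<theta> - sin \<theta>^2 * - sin \<theta>) / (cos \<theta> * cos \<theta>)) (at \<theta>)"
      unfolding Phi_profile_def using that
      by (auto intro!: derivative_eq_intros simp: power2_eq_square; simp add: algebra_simps)
    then show ?thesis using that by (simp add: f'_def field_simps power2_eq_square power3_eq_cube)
  qed
  have "cos \<zeta> \<noteq> 0" using assms sin_cos_squared_add[of \<zeta>] by auto
  have "eventually (\<lambda>\<theta>. 0 < cos \<theta>^2) (nhds \<zeta>)"
    using \<open>cos \<zeta> \<noteq> 0\<close> by (intro eventually_nhds_pos continuous_intros) simp
  then have "eventually (\<lambda>\<theta>. (Phi_profile a K has_real_derivative f' \<theta>) (at \<theta>)) (nhds \<zeta>)"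
    by eventually_elim (simp add: d1)
  moreover have "(f' has_real_derivative (2 * K - a / 2) * cos \<zeta>) (at \<zeta>)"
  proof -
    have "(f' has_real_derivative - a * cos \<zeta> / 2 + K * (2 * cos \<zeta> +
        ((3 * sin \<zeta>^2 * cos \<zeta>) * cos \<zeta>^2 - sin \<zeta>^3 * (2 * cos \<zeta> * - sin \<zeta>)) / (cos \<zeta>^2)^2)) (at \<zeta>)"
      unfolding f'_def using \<open>cos \<zeta> \<noteq> 0\<close>
      by (auto intro!: derivative_eq_intros simp: power2_eq_square power3_eq_cube)
    then show ?thesis using assms by (simp add: algebra_simps)
  qed
  ultimately show "has_second_derivative_at (Phi_profile a K) ((2 * K - a / 2) * cos \<zeta>) \<zeta>"
    unfolding has_second_derivative_at_def by blast
  show "(Phi_profile a K has_real_derivative 0) (at \<zeta>)"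
    using d1[OF \<open>cos \<zeta> \<noteq> 0\<close>] assms by (simp add: f'_def)
  show "Phi_profile a K \<zeta> = (1 + a * cos \<zeta>) / 2" using assms by (simp add: Phi_profile_def)
qed

lemma deriv2_diff_at_pole:
  fixes \<zeta> :: real
  assumes "sin \<zeta> = 0" "0 < 1 + a * cos \<zeta>"
    and f: "eventually (\<lambda>\<theta>. f \<theta> = Phi_profile a K \<theta>) (nhds \<zeta>)"
    and g: "eventually (\<lambda>\<theta>. g \<theta> = Phi_profile a L \<theta>) (nhds \<zeta>)"
  shows "deriv (deriv (\<lambda>\<theta>. f \<theta> - g \<theta>)) \<zeta> = 2 * (K - L) * cos \<zeta>"
    and "deriv (deriv (\<lambda>\<theta>. log 2 (f \<theta>) - log 2 (g \<theta>))) \<zeta> = 2 * (K - L) * cos \<zeta> / ((1 + a * cos \<zeta>) / 2 * ln 2)"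
proof -
  note P = Phi_profile_derivatives[OF assms(1)]
  have "eventually (\<lambda>\<theta>. f \<theta> - g \<theta> = Phi_profile a K \<theta> - Phi_profile a L \<theta>) (nhds \<zeta>)"
    using f g by eventually_elim simp
  then have "has_second_derivative_at (\<lambda>\<theta>. f \<theta> - g \<theta>) ((2 * K - a / 2) * cos \<zeta> - (2 * L - a / 2) * cos \<zeta>) \<zeta>"
    by (rule has_second_derivative_at_cong) (intro has_second_derivative_at_diff P(1))
  then show "deriv (deriv (\<lambda>\<theta>. f \<theta> - g \<theta>)) \<zeta> = 2 * (K - L) * cos \<zeta>"
    by (simp add: deriv_deriv_eq_of_has_second_derivative_at algebra_simps)
  have log: "has_second_derivative_at (\<lambda>\<theta>. log 2 (Phi_profile a M \<theta>))
      ((2 * M - a / 2) * cos \<zeta> / ((1 + a * cos \<zeta>) / 2 * ln 2)) \<zeta>" for M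
  proof -
    have "0 < Phi_profile a M \<zeta>" unfolding P(3) using assms(2) by simp
    from has_second_derivative_at_log[OF P(1) P(2) this, where b = 2] show ?thesis by (simp add: P(3))
  qed
  have "eventually (\<lambda>\<theta>. log 2 (f \<theta>) - log 2 (g \<theta>) = log 2 (Phi_profile a K \<theta>) - log 2 (Phi_profile a L \<theta>)) (nhds \<zeta>)"
    using f g by eventually_elim simp
  then have "has_second_derivative_at (\<lambda>\<theta>. log 2 (f \<theta>) - log 2 (g \<theta>))
      ((2 * K - a / 2) * cos \<zeta> / ((1 + a * cos \<zeta>) / 2 * ln 2) - (2 * L - a / 2) * cos \<zeta> / ((1 + a * cos \<zeta>) / 2 * ln 2)) \<zeta>"
    by (rule has_second_derivative_at_cong) (intro has_second_derivative_at_diff log)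
  then show "deriv (deriv (\<lambda>\<theta>. log 2 (f \<theta>) - log 2 (g \<theta>))) \<zeta> = 2 * (K - L) * cos \<zeta> / ((1 + a * cos \<zeta>) / 2 * ln 2)"
    by (simp add: deriv_deriv_eq_of_has_second_derivative_at diff_divide_distrib[symmetric] algebra_simps)
qed

lemma deriv2_Phi_eta:
  assumes \<rho>: "qubit_state \<rho>" and \<sigma>: "qubit_state \<sigma>" and r: "0 < r" "r \<le> 1"
  shows "deriv (deriv (\<lambda>\<theta>. Phi (eta r \<theta> \<phi>) \<rho> - Phi (eta r \<theta> \<phi>) \<sigma>)) 0
      = r / 2 * (coherence_over_pop1 \<rho> - coherence_over_pop1 \<sigma>)"
    and "deriv (deriv (\<lambda>\<theta>. Phi (eta r \<theta> \<phi>) \<rho> - Phi (eta r \<theta> \<phi>) \<sigma>)) pi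
      = r / 2 * (coherence_over_pop0 \<rho> - coherence_over_pop0 \<sigma>)"
    and "deriv (deriv (\<lambda>\<theta>. H (eta r \<theta> \<phi>) \<sigma> - H (eta r \<theta> \<phi>) \<rho>)) 0
      = r / 2 * (coherence_over_pop1 \<rho> - coherence_over_pop1 \<sigma>) / ((1 + r) / 2 * ln 2)"
    and "deriv (deriv (\<lambda>\<theta>. H (eta r \<theta> \<phi>) \<sigma> - H (eta r \<theta> \<phi>) \<rho>)) pi
      = r / 2 * (coherence_over_pop0 \<rho> - coherence_over_pop0 \<sigma>) / ((1 + r) / 2 * ln 2)"
proof -
  have H: "(\<lambda>\<theta>. H (eta r \<theta> \<phi>) \<sigma> - H (eta r \<theta> \<phi>) \<rho>)
      = (\<lambda>\<theta>. log 2 (Phi (eta r \<theta> \<phi>) \<rho>) - log 2 (Phi (eta r \<theta> \<phi>) \<sigma>))"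
    by (simp add: H_def fun_eq_iff)
  have poles: "sin 0 = 0" "0 < 1 + r * cos 0" "sin pi = 0" "0 < 1 + - r * cos pi" using r by auto
  have "0 < ln 2 + r * ln (2::real)" using r by (intro add_pos_nonneg) auto
  then have "ln 2 + r * ln 2 \<noteq> 0" by simp
  note at_0 = deriv2_diff_at_pole[OF poles(1,2) Phi_eta_near_0[OF \<rho> r, of \<phi>] Phi_eta_near_0[OF \<sigma> r, of \<phi>]]
  note at_pi = deriv2_diff_at_pole[OF poles(3,4) Phi_eta_near_pi[OF \<rho> r, of \<phi>] Phi_eta_near_pi[OF \<sigma> r, of \<phi>]]
  show "deriv (deriv (\<lambda>\<theta>. Phi (eta r \<theta> \<phi>) \<rho> - Phi (eta r \<theta> \<phi>) \<sigma>)) 0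
      = r / 2 * (coherence_over_pop1 \<rho> - coherence_over_pop1 \<sigma>)"
    unfolding at_0(1) by (simp add: algebra_simps)
  show "deriv (deriv (\<lambda>\<theta>. Phi (eta r \<theta> \<phi>) \<rho> - Phi (eta r \<theta> \<phi>) \<sigma>)) pi
      = r / 2 * (coherence_over_pop0 \<rho> - coherence_over_pop0 \<sigma>)"
    unfolding at_pi(1) by (simp add: algebra_simps)
  show "deriv (deriv (\<lambda>\<theta>. H (eta r \<theta> \<phi>) \<sigma> - H (eta r \<theta> \<phi>) \<rho>)) 0
      = r / 2 * (coherence_over_pop1 \<rho> - coherence_over_pop1 \<sigma>) / ((1 + r) / 2 * ln 2)"
    unfolding H at_0(2) using \<open>ln 2 + r * ln 2 \<noteq> 0\<close> by (simp add: field_simps)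
  show "deriv (deriv (\<lambda>\<theta>. H (eta r \<theta> \<phi>) \<sigma> - H (eta r \<theta> \<phi>) \<rho>)) pi
      = r / 2 * (coherence_over_pop0 \<rho> - coherence_over_pop0 \<sigma>) / ((1 + r) / 2 * ln 2)"
    unfolding H at_pi(2) using \<open>ln 2 + r * ln 2 \<noteq> 0\<close> by (simp add: field_simps)
qed

lemma deriv2_nonneg_at_poles_iff:
  assumes "qubit_state \<rho>" "qubit_state \<sigma>" "0 < r" "r \<le> 1"
  shows "(0 \<le> deriv (deriv (\<lambda>\<theta>. Phi (eta r \<theta> \<phi>) \<rho> - Phi (eta r \<theta> \<phi>) \<sigma>)) 0 \<and>
      0 \<le> deriv (deriv (\<lambda>\<theta>. Phi (eta r \<theta> \<phi>) \<rho> - Phi (eta r \<theta> \<phi>) \<sigma>)) pi) \<longleftrightarrow>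
      coherence_over_pop1 \<sigma> \<le> coherence_over_pop1 \<rho> \<and> coherence_over_pop0 \<sigma> \<le> coherence_over_pop0 \<rho>"
    and "(0 \<le> deriv (deriv (\<lambda>\<theta>. H (eta r \<theta> \<phi>) \<sigma> - H (eta r \<theta> \<phi>) \<rho>)) 0 \<and>
      0 \<le> deriv (deriv (\<lambda>\<theta>. H (eta r \<theta> \<phi>) \<sigma> - H (eta r \<theta> \<phi>) \<rho>)) pi) \<longleftrightarrow>
      coherence_over_pop1 \<sigma> \<le> coherence_over_pop1 \<rho> \<and> coherence_over_pop0 \<sigma> \<le> coherence_over_pop0 \<rho>"
proof -
  have "0 < (1 + r) / 2 * ln (2::real)" using assms(3) by simp
  then have pos_div: "0 \<le> x / ((1 + r) / 2 * ln 2) \<longleftrightarrow> 0 \<le> x" for x :: real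
    by (simp add: zero_le_divide_iff)
  show "(0 \<le> deriv (deriv (\<lambda>\<theta>. Phi (eta r \<theta> \<phi>) \<rho> - Phi (eta r \<theta> \<phi>) \<sigma>)) 0 \<and>
      0 \<le> deriv (deriv (\<lambda>\<theta>. Phi (eta r \<theta> \<phi>) \<rho> - Phi (eta r \<theta> \<phi>) \<sigma>)) pi) \<longleftrightarrow>
      coherence_over_pop1 \<sigma> \<le> coherence_over_pop1 \<rho> \<and> coherence_over_pop0 \<sigma> \<le> coherence_over_pop0 \<rho>"
    "(0 \<le> deriv (deriv (\<lambda>\<theta>. H (eta r \<theta> \<phi>) \<sigma> - H (eta r \<theta> \<phi>) \<rho>)) 0 \<and>
      0 \<le> deriv (deriv (\<lambda>\<theta>. H (eta r \<theta> \<phi>) \<sigma> - H (eta r \<theta> \<phi>) \<rho>)) pi) \<longleftrightarrow>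
      coherence_over_pop1 \<sigma> \<le> coherence_over_pop1 \<rho> \<and> coherence_over_pop0 \<sigma> \<le> coherence_over_pop0 \<rho>"
    unfolding deriv2_Phi_eta[OF assms] pos_div using assms(3) by (simp_all add: zero_le_mult_iff)
qed

section \<open>Time-covariant qubit channels\<close>

lemma sum_lessThan_double:
  fixes f :: "nat \<Rightarrow> 'a::comm_monoid_add"
  shows "(\<Sum>i<n*2. f i) = (\<Sum>q<n. f (2*q) + f (2*q+1))"
proof (induction n)
  case (Suc n)
  have "Suc n * 2 = Suc (Suc (n * 2))" by simp
  then show ?case using Suc.IH by (simp add: add_ac mult.commute)
qed simp

lemma sum_lessThan_2:
  fixes f :: "nat \<Rightarrow> 'a::comm_monoid_add"
  shows "(\<Sum>a<2. f a) = f 0 + f 1"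
  by (simp add: numeral_2_eq_2)

text \<open>The vector on the right is \<open>(1 \<otimes> K\<^sup>\<dagger>) x\<close>.\<close>
lemma quad_form_Kraus:
  fixes k :: "nat \<Rightarrow> nat \<Rightarrow> complex"
  shows "(\<Sum>i<n*2. \<Sum>j<n*2. cnj (x i) *
      (\<Sum>b<2. \<Sum>d<2. k (i mod 2) b * M $$ (2*(i div 2)+b, 2*(j div 2)+d) * cnj (k (j mod 2) d)) * x j)
    = quad_form (n*2) M (\<lambda>m. \<Sum>a<2. cnj (k a (m mod 2)) * x (2*(m div 2) + a))"
proof -
  have [simp]: "Suc (q * 2) mod 2 = 1" "Suc (q * 2) div 2 = q" for q :: nat by presburger+
  show ?thesis unfolding quad_form_def sum_lessThan_double sum_lessThan_2
    by (simp add: sum.distrib[symmetric] algebra_simps)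
qed

lemma completely_positive_Kraus:
  fixes K :: "'i \<Rightarrow> nat \<Rightarrow> nat \<Rightarrow> complex"
  assumes E: "\<And>X a c. X \<in> carrier_mat 2 2 \<Longrightarrow> a < 2 \<Longrightarrow> c < 2 \<Longrightarrow>
      E X $$ (a,c) = (\<Sum>\<iota>\<in>I. \<Sum>b<2. \<Sum>d<2. K \<iota> a b * X $$ (b,d) * cnj (K \<iota> c d))"
  shows "completely_positive E"
  unfolding completely_positive_def
proof (intro allI impI)
  fix n M assume "1 \<le> n" and M: "psd (n*2) M"
  let ?N = "id_tensor n E M"
  let ?y = "\<lambda>\<iota> x m. \<Sum>a<2. cnj (K \<iota> a (m mod 2)) * x (2 * (m div 2) + a)"
  have N: "?N $$ (i,j) = (\<Sum>\<iota>\<in>I. \<Sum>b<2. \<Sum>d<2.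
      K \<iota> (i mod 2) b * M $$ (2 * (i div 2) + b, 2 * (j div 2) + d) * cnj (K \<iota> (j mod 2) d))"
    if "i < n*2" "j < n*2" for i j
    using that unfolding id_tensor_def by (simp add: E)
  have "quad_form (n*2) ?N x = (\<Sum>\<iota>\<in>I. quad_form (n*2) M (?y \<iota> x))" for x
  proof -
    have "quad_form (n*2) ?N x = (\<Sum>i<n*2. \<Sum>j<n*2. \<Sum>\<iota>\<in>I. cnj (x i) * (\<Sum>b<2. \<Sum>d<2.
        K \<iota> (i mod 2) b * M $$ (2 * (i div 2) + b, 2 * (j div 2) + d) * cnj (K \<iota> (j mod 2) d)) * x j)"
      unfolding quad_form_def by (simp add: N sum_distrib_left sum_distrib_right)
    also have "\<dots> = (\<Sum>\<iota>\<in>I. \<Sum>i<n*2. \<Sum>j<n*2. cnj (x i) * (\<Sum>b<2. \<Sum>d<2.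
        K \<iota> (i mod 2) b * M $$ (2 * (i div 2) + b, 2 * (j div 2) + d) * cnj (K \<iota> (j mod 2) d)) * x j)"
      by (subst sum.swap, subst (2) sum.swap) (rule refl)
    finally show ?thesis by (simp only: quad_form_Kraus)
  qed
  moreover have "Im (quad_form (n*2) M y) = 0" "0 \<le> Re (quad_form (n*2) M y)" for y
    using M unfolding psd_iff_quad_form by auto
  ultimately show "psd (n*2) ?N"
    unfolding psd_iff_quad_form by (auto simp: id_tensor_def intro: sum_nonneg)
qed

definition phase_covariant_map :: "real \<Rightarrow> real \<Rightarrow> complex \<Rightarrow> complex mat \<Rightarrow> complex mat" where
  "phase_covariant_map a b \<gamma> X = mat 2 2 (\<lambda>(i,j).
     if i = j then (if i = 0 then of_real a * X $$ (0,0) + of_real (1 - b) * X $$ (1,1)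
                   else of_real (1 - a) * X $$ (0,0) + of_real b * X $$ (1,1))
     else if i = 0 then \<gamma> * X $$ (0,1) else cnj \<gamma> * X $$ (1,0))"

lemma phase_covariant_map_index:
  "phase_covariant_map a b \<gamma> X \<in> carrier_mat 2 2"
  "phase_covariant_map a b \<gamma> X $$ (0,0) = of_real a * X $$ (0,0) + of_real (1 - b) * X $$ (1,1)"
  "phase_covariant_map a b \<gamma> X $$ (0,1) = \<gamma> * X $$ (0,1)"
  "phase_covariant_map a b \<gamma> X $$ (1,0) = cnj \<gamma> * X $$ (1,0)"
  "phase_covariant_map a b \<gamma> X $$ (1,1) = of_real (1 - a) * X $$ (0,0) + of_real b * X $$ (1,1)"
  unfolding phase_covariant_map_def by simp_all

lemma phase_covariant_map_linear: "qubit_linear (phase_covariant_map a b \<gamma>)"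
  unfolding qubit_linear_def
  by (auto intro!: mat_2_eqI simp: phase_covariant_map_def algebra_simps)

lemma phase_covariant_map_trace_preserving: "trace_preserving (phase_covariant_map a b \<gamma>)"
  unfolding trace_preserving_def
  by (simp add: mtrace_2 phase_covariant_map_def algebra_simps)

lemma phase_covariant_map_time_covariant: "time_covariant (phase_covariant_map a b \<gamma>)"
  unfolding time_covariant_def
proof (intro ballI)
  fix t and X :: "complex mat" assume X: "X \<in> carrier_mat 2 2"
  have unimodular: "U_phase i t * (cnj (U_phase i t) * z) = z" for i z
    using U_phase_cnj[of i t] by (metis mult.assoc mult_1)
  show "phase_covariant_map a b \<gamma> (U t * X * madj (U t)) = U t * phase_covariant_map a b \<gamma> X * madj (U t)"
    using X by (intro mat_2_eqI)
      (simp_all add: U_conj_carrier phase_covariant_map_def U_conj_index unimodular algebra_simps)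
qed

lemma sqrt_mult_cnj_factorization:
  assumes "0 \<le> a" "0 \<le> b" "cmod \<gamma>^2 \<le> a * b"
  obtains \<beta> where "of_real (sqrt a) * cnj \<beta> = \<gamma>" "cmod \<beta>^2 \<le> b"
proof (cases "a = 0")
  case True
  with assms have "\<gamma> = 0" by simp
  with True assms(2) show ?thesis by (intro that[of 0]) auto
next
  case False
  with assms(1) have "0 < a" by simp
  have "cmod (cnj \<gamma> / of_real (sqrt a))^2 = cmod \<gamma>^2 / a"
    using \<open>0 < a\<close> by (simp add: norm_divide power_divide)
  also have "\<dots> \<le> b" using assms(3) \<open>0 < a\<close> by (simp add: divide_le_eq mult.commute)
  finally show ?thesis using \<open>0 < a\<close> by (intro that[of "cnj \<gamma> / of_real (sqrt a)"]) auto
qed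

lemma phase_covariant_map_completely_positive:
  assumes a: "0 \<le> a" "a \<le> 1" and b: "0 \<le> b" "b \<le> 1" and \<gamma>: "cmod \<gamma>^2 \<le> a * b"
  shows "completely_positive (phase_covariant_map a b \<gamma>)"
proof -
  define \<alpha> where "\<alpha> = complex_of_real (sqrt a)"
  obtain \<beta> where "\<alpha> * cnj \<beta> = \<gamma>" "cmod \<beta>^2 \<le> b"
    using sqrt_mult_cnj_factorization[OF a(1) b(1) \<gamma>] unfolding \<alpha>_def by blast
  have Kraus_terms: "\<alpha> * z * cnj \<alpha> = of_real a * z" "\<beta> * z * cnj \<beta> = of_real (cmod \<beta>^2) * z"
    "\<alpha> * z * cnj \<beta> = \<gamma> * z" "\<beta> * z * cnj \<alpha> = cnj \<gamma> * z"
    "0 \<le> x \<Longrightarrow> of_real (sqrt x) * z * of_real (sqrt x) = of_real x * z" for z x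
  proof -
    show "\<alpha> * z * cnj \<alpha> = of_real a * z" using a by (simp add: \<alpha>_def mult_ac flip: of_real_mult)
    have "\<beta> * z * cnj \<beta> = (\<beta> * cnj \<beta>) * z" by (simp add: mult_ac)
    then show "\<beta> * z * cnj \<beta> = of_real (cmod \<beta>^2) * z" by (simp only: complex_norm_square)
    show "\<alpha> * z * cnj \<beta> = \<gamma> * z" using \<open>\<alpha> * cnj \<beta> = \<gamma>\<close> by (simp add: mult_ac)
    show "\<beta> * z * cnj \<alpha> = cnj \<gamma> * z"
      using arg_cong[OF \<open>\<alpha> * cnj \<beta> = \<gamma>\<close>, of cnj] by (simp add: \<alpha>_def mult_ac)
    show "0 \<le> x \<Longrightarrow> of_real (sqrt x) * z * of_real (sqrt x) = of_real x * z"
      by (simp add: mult_ac flip: of_real_mult)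
  qed
  \<comment> \<open>Kraus operators \<open>diag(\<alpha>, \<beta>)\<close>, \<open>\<surd>(b - |\<beta>|\<^sup>2) |1><1|\<close>, \<open>\<surd>(1 - b) |0><1|\<close>, \<open>\<surd>(1 - a) |1><0|\<close>\<close>
  define K :: "nat \<Rightarrow> nat \<Rightarrow> nat \<Rightarrow> complex" where
    "K \<iota> i j = (if \<iota> = 0 then (if i = j then (if i = 0 then \<alpha> else \<beta>) else 0)
       else if \<iota> = 1 then (if i = 1 \<and> j = 1 then of_real (sqrt (b - cmod \<beta>^2)) else 0)
       else if \<iota> = 2 then (if i = 0 \<and> j = 1 then of_real (sqrt (1 - b)) else 0)
       else (if i = 1 \<and> j = 0 then of_real (sqrt (1 - a)) else 0))" for \<iota> i j
  show ?thesis
  proof (rule completely_positive_Kraus[where K = K and I = "{..<4}"])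
    fix X :: "complex mat" and i j :: nat assume "X \<in> carrier_mat 2 2" "i < 2" "j < 2"
    then have "i \<in> {0,1}" "j \<in> {0,1}" by auto
    then show "phase_covariant_map a b \<gamma> X $$ (i,j) =
        (\<Sum>\<iota><4. \<Sum>k<2. \<Sum>l<2. K \<iota> i k * X $$ (k,l) * cnj (K \<iota> j l))"
      using a b \<open>cmod \<beta>^2 \<le> b\<close>
      by (auto simp: phase_covariant_map_def K_def sum_lessThan_2 eval_nat_numeral Kraus_terms)
        (simp_all add: algebra_simps)
  qed
qed

definition mat_unit :: "nat \<Rightarrow> nat \<Rightarrow> complex mat" where
  "mat_unit i j = mat 2 2 (\<lambda>(k,l). if k = i \<and> l = j then 1 else 0)"

lemma mat_unit_carrier [simp]: "mat_unit i j \<in> carrier_mat 2 2"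
  unfolding mat_unit_def by simp

lemma qubit_linear_smult:
  assumes "qubit_linear E" "X \<in> carrier_mat 2 2"
  shows "E (c \<cdot>\<^sub>m X) = c \<cdot>\<^sub>m E X"
proof -
  have "E X \<in> carrier_mat 2 2" "E (c \<cdot>\<^sub>m X + 0 \<cdot>\<^sub>m X) = c \<cdot>\<^sub>m E X + 0 \<cdot>\<^sub>m E X"
    using assms unfolding qubit_linear_def by blast+
  moreover have "c \<cdot>\<^sub>m X + 0 \<cdot>\<^sub>m X = c \<cdot>\<^sub>m X" using assms(2) by (intro eq_matI) auto
  moreover have "c \<cdot>\<^sub>m E X + 0 \<cdot>\<^sub>m E X = c \<cdot>\<^sub>m E X" if "E X \<in> carrier_mat 2 2"
    using that by (intro eq_matI) auto
  ultimately show ?thesis by simp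
qed

lemma qubit_linear_add:
  assumes "qubit_linear E" "X \<in> carrier_mat 2 2" "Y \<in> carrier_mat 2 2"
  shows "E (X + Y) = E X + E Y"
proof -
  have "E X \<in> carrier_mat 2 2" "E Y \<in> carrier_mat 2 2" "E (1 \<cdot>\<^sub>m X + 1 \<cdot>\<^sub>m Y) = 1 \<cdot>\<^sub>m E X + 1 \<cdot>\<^sub>m E Y"
    using assms unfolding qubit_linear_def by blast+
  moreover have "1 \<cdot>\<^sub>m X + 1 \<cdot>\<^sub>m Y = X + Y" using assms(2,3) by (intro eq_matI) auto
  moreover have "1 \<cdot>\<^sub>m A + 1 \<cdot>\<^sub>m B = A + B" if "A \<in> carrier_mat 2 2" "B \<in> carrier_mat 2 2" for A B :: "complex mat"
    using that by (intro eq_matI) auto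
  ultimately show ?thesis by simp
qed

lemma mat_2_eq_sum_mat_units:
  assumes "X \<in> carrier_mat 2 2"
  shows "X = (X $$ (0,0) \<cdot>\<^sub>m mat_unit 0 0 + X $$ (0,1) \<cdot>\<^sub>m mat_unit 0 1)
    + (X $$ (1,0) \<cdot>\<^sub>m mat_unit 1 0 + X $$ (1,1) \<cdot>\<^sub>m mat_unit 1 1)"
  using assms by (intro mat_2_eqI) (auto simp: mat_unit_def)

lemma qubit_linear_eqI:
  assumes "qubit_linear E" "qubit_linear F" "\<And>i j. i < 2 \<Longrightarrow> j < 2 \<Longrightarrow> E (mat_unit i j) = F (mat_unit i j)"
    and "X \<in> carrier_mat 2 2"
  shows "E X = F X"
  by (subst (1 2) mat_2_eq_sum_mat_units[OF assms(4)])
    (simp add: qubit_linear_add qubit_linear_smult assms)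

lemma U_phase_quarter_period:
  assumes "k < 2" "l < 2"
  shows "U_phase k (pi/4) * cnj (U_phase l (pi/4)) = (if k = l then 1 else if k = 0 then - \<i> else \<i>)"
proof -
  have "exp (\<i> * complex_of_real (pi / 4)) * exp (\<i> * complex_of_real (pi / 4)) = \<i>"
    using cis_pi_half by (simp add: cis_conv_exp exp_add[symmetric] field_simps)
  then show ?thesis using assms U_phase_cnj[of _ "pi/4"]
    by (auto simp: U_phase_def less_2_cases_iff exp_cnj exp_minus field_simps)
qed

lemma time_covariant_mat_unit_index:
  assumes E: "time_covariant E" "qubit_linear E"
    and ijkl: "i < 2" "j < 2" "k < 2" "l < 2" and charge: "int k - int l \<noteq> int i - int j"
  shows "E (mat_unit i j) $$ (k,l) = 0"
proof -
  let ?t = "pi/4" and ?\<omega> = "\<lambda>k l. U_phase k (pi/4) * cnj (U_phase l (pi/4))"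
  have Y: "E (mat_unit i j) \<in> carrier_mat 2 2" using E(2) unfolding qubit_linear_def by simp
  have "U ?t * mat_unit i j * madj (U ?t) = ?\<omega> i j \<cdot>\<^sub>m mat_unit i j"
  proof (rule eq_matI)
    fix k' l' assume "k' < dim_row (?\<omega> i j \<cdot>\<^sub>m mat_unit i j)" "l' < dim_col (?\<omega> i j \<cdot>\<^sub>m mat_unit i j)"
    then have "k' < 2" "l' < 2" by (simp_all add: mat_unit_def)
    then show "(U ?t * mat_unit i j * madj (U ?t)) $$ (k', l') = (?\<omega> i j \<cdot>\<^sub>m mat_unit i j) $$ (k', l')"
      by (auto simp: U_conj_index mat_unit_def)
  qed (use U_conj_carrier[OF mat_unit_carrier, of ?t i j] in \<open>auto simp: mat_unit_def\<close>)
  moreover have "E (U ?t * mat_unit i j * madj (U ?t)) = U ?t * E (mat_unit i j) * madj (U ?t)"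
    using E(1) unfolding time_covariant_def by simp
  ultimately have "?\<omega> i j \<cdot>\<^sub>m E (mat_unit i j) = U ?t * E (mat_unit i j) * madj (U ?t)"
    using qubit_linear_smult[OF E(2)] by simp
  then have "(?\<omega> i j \<cdot>\<^sub>m E (mat_unit i j)) $$ (k,l) = (U ?t * E (mat_unit i j) * madj (U ?t)) $$ (k,l)"
    by simp
  then have "?\<omega> i j * E (mat_unit i j) $$ (k,l) = ?\<omega> k l * E (mat_unit i j) $$ (k,l)"
    using Y ijkl by (simp add: U_conj_index mult_ac)
  \<comment> \<open>the phases \<open>1, -\<i>, \<i>\<close> at \<open>t = pi/4\<close> separate the three values of \<open>k - l\<close>\<close>
  moreover have "?\<omega> i j \<noteq> ?\<omega> k l"
    using ijkl charge by (auto simp: U_phase_quarter_period less_2_cases_iff complex_eq_iff)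
  ultimately show ?thesis by simp
qed

text \<open>The unnormalised projector onto \<open>|00> + |11>\<close>.\<close>
definition choi_input :: "complex mat" where
  "choi_input = mat 4 4 (\<lambda>(i,j). if i \<in> {0,3} \<and> j \<in> {0,3} then 1 else 0)"

lemma choi_input_psd: "psd (2*2) choi_input"
proof -
  have "quad_form 4 choi_input x = of_real (cmod (x 0 + x 3)^2)" for x
    unfolding quad_form_def choi_input_def complex_norm_square
    by (simp add: eval_nat_numeral algebra_simps)
  then show ?thesis unfolding psd_iff_quad_form by (simp add: choi_input_def)
qed

lemma id_tensor_choi_input_index:
  assumes "i < 4" "j < 4"
  shows "id_tensor 2 E choi_input $$ (i,j) = E (mat_unit (i div 2) (j div 2)) $$ (i mod 2, j mod 2)"
proof -
  have "mat 2 2 (\<lambda>(b,d). choi_input $$ (2 * (i div 2) + b, 2 * (j div 2) + d)) = mat_unit (i div 2) (j div 2)"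
  proof (rule eq_matI)
    fix k l assume "k < dim_row (mat_unit (i div 2) (j div 2))" "l < dim_col (mat_unit (i div 2) (j div 2))"
    then have "k \<in> {0,1}" "l \<in> {0,1}" "i \<in> {0,1,2,3}" "j \<in> {0,1,2,3}" using assms by (auto simp: mat_unit_def)
    then show "mat 2 2 (\<lambda>(b,d). choi_input $$ (2 * (i div 2) + b, 2 * (j div 2) + d)) $$ (k,l)
        = mat_unit (i div 2) (j div 2) $$ (k,l)"
      by (auto simp: choi_input_def mat_unit_def)
  qed (auto simp: mat_unit_def)
  then show ?thesis unfolding id_tensor_def using assms by simp
qed

lemma qubit_channel_mat_unit_entries:
  assumes "qubit_channel E"
  defines "a \<equiv> Re (E (mat_unit 0 0) $$ (0,0))" and "b \<equiv> Re (E (mat_unit 1 1) $$ (1,1))"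
    and "\<gamma> \<equiv> E (mat_unit 0 1) $$ (0,1)"
  shows "0 \<le> a" "a \<le> 1" "0 \<le> b" "b \<le> 1" "cmod \<gamma>^2 \<le> a * b"
    and "E (mat_unit 0 0) $$ (0,0) = of_real a" "E (mat_unit 0 0) $$ (1,1) = 1 - of_real a"
    and "E (mat_unit 1 1) $$ (1,1) = of_real b" "E (mat_unit 1 1) $$ (0,0) = 1 - of_real b"
    and "E (mat_unit 1 0) $$ (1,0) = cnj \<gamma>"
proof -
  have lin: "qubit_linear E" and CP: "completely_positive E" and TP: "trace_preserving E"
    using assms(1) unfolding qubit_channel_def by auto
  have Y: "E (mat_unit i j) \<in> carrier_mat 2 2" for i j using lin unfolding qubit_linear_def by simp
  have N: "psd 4 (id_tensor 2 E choi_input)"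
    using CP choi_input_psd unfolding completely_positive_def by (metis one_le_numeral mult_2 numeral_Bit0)
  note N_index = id_tensor_choi_input_index
  have trace: "E (mat_unit i i) $$ (0,0) + E (mat_unit i i) $$ (1,1) = 1" if "i < 2" for i
  proof -
    have "mtrace (mat_unit i i) = 1" using that by (auto simp: mtrace_2 mat_unit_def less_2_cases_iff)
    then have "mtrace (E (mat_unit i i)) = 1" using TP unfolding trace_preserving_def by simp
    then show ?thesis unfolding mtrace_2[OF Y] .
  qed
  show "E (mat_unit 0 0) $$ (0,0) = of_real a" "E (mat_unit 1 1) $$ (1,1) = of_real b"
    "E (mat_unit 1 0) $$ (1,0) = cnj \<gamma>"
    using psd_diag_real[OF N, of 0] psd_diag_real[OF N, of 3] psd_hermitian[OF N, of 0 3]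
    by (simp_all add: N_index a_def b_def \<gamma>_def)
  then show "E (mat_unit 0 0) $$ (1,1) = 1 - of_real a" "E (mat_unit 1 1) $$ (0,0) = 1 - of_real b"
    using trace[of 0] trace[of 1] by (simp_all add: eq_diff_eq add.commute)
  show "0 \<le> a" "a \<le> 1" "0 \<le> b" "b \<le> 1" "cmod \<gamma>^2 \<le> a * b"
    using psd_diag_nonneg[OF N, of 0] psd_diag_nonneg[OF N, of 1] psd_diag_nonneg[OF N, of 2]
      psd_diag_nonneg[OF N, of 3] psd_principal_minor[OF N, of 0 3] trace[of 0] trace[of 1]
    by (simp_all add: N_index a_def b_def \<gamma>_def complex_eq_iff)
qed

lemma time_covariant_channel_eq_phase_covariant_map:
  assumes E: "qubit_channel E" "time_covariant E"
  obtains a b \<gamma> where "0 \<le> a" "a \<le> 1" "0 \<le> b" "b \<le> 1" "cmod \<gamma>^2 \<le> a * b"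
    and "\<And>X. X \<in> carrier_mat 2 2 \<Longrightarrow> E X = phase_covariant_map a b \<gamma> X"
proof -
  have lin: "qubit_linear E" using E(1) unfolding qubit_channel_def by simp
  define a b \<gamma> where "a = Re (E (mat_unit 0 0) $$ (0,0))" and "b = Re (E (mat_unit 1 1) $$ (1,1))"
    and "\<gamma> = E (mat_unit 0 1) $$ (0,1)"
  note entries = qubit_channel_mat_unit_entries[OF E(1), folded a_def b_def \<gamma>_def]
  have units: "E (mat_unit i j) = phase_covariant_map a b \<gamma> (mat_unit i j)" if "i < 2" "j < 2" for i j
  proof -
    have entry: "E (mat_unit i j) $$ (k,l) = phase_covariant_map a b \<gamma> (mat_unit i j) $$ (k,l)"
      if "k < 2" "l < 2" for k l
    proof (cases "int k - int l = int i - int j")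
      case True
      then show ?thesis using \<open>i < 2\<close> \<open>j < 2\<close> that entries(6-10)
        by (auto simp: less_2_cases_iff phase_covariant_map_def mat_unit_def \<gamma>_def)
    next
      case False
      with time_covariant_mat_unit_index[OF E(2) lin \<open>i < 2\<close> \<open>j < 2\<close> that] \<open>i < 2\<close> \<open>j < 2\<close> that
      show ?thesis by (auto simp: less_2_cases_iff phase_covariant_map_def mat_unit_def)
    qed
    have "E (mat_unit i j) \<in> carrier_mat 2 2" using lin unfolding qubit_linear_def by simp
    then show ?thesis
      by (intro mat_2_eqI entry) (simp_all add: phase_covariant_map_index(1))
  qed
  have "E X = phase_covariant_map a b \<gamma> X" if "X \<in> carrier_mat 2 2" for X
    by (rule qubit_linear_eqI[OF lin phase_covariant_map_linear units that])
  with entries(1-5) that show ?thesis by blast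
qed

section \<open>Reachability criterion\<close>

lemma phase_covariant_map_state_eq_iff:
  assumes \<rho>: "qubit_state \<rho>" and \<sigma>: "qubit_state \<sigma>"
  shows "phase_covariant_map a b \<gamma> \<rho> = \<sigma> \<longleftrightarrow>
    pop0 \<sigma> = a * pop0 \<rho> + (1 - b) * (1 - pop0 \<rho>) \<and> coh \<sigma> = \<gamma> * coh \<rho>"
proof -
  note R = qubit_state_entries[OF \<rho>] and S = qubit_state_entries[OF \<sigma>]
  have "phase_covariant_map a b \<gamma> \<rho> $$ (0,0) = of_real (a * pop0 \<rho> + (1 - b) * (1 - pop0 \<rho>))"
    "phase_covariant_map a b \<gamma> \<rho> $$ (1,1) = of_real (1 - (a * pop0 \<rho> + (1 - b) * (1 - pop0 \<rho>)))"
    "phase_covariant_map a b \<gamma> \<rho> $$ (0,1) = \<gamma> * coh \<rho>"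
    "phase_covariant_map a b \<gamma> \<rho> $$ (1,0) = cnj (\<gamma> * coh \<rho>)"
    unfolding phase_covariant_map_index R(2,3,4) coh_def by (simp_all add: algebra_simps)
  moreover have "\<sigma> $$ (0,1) = coh \<sigma>" by (simp add: coh_def)
  ultimately show ?thesis using S(1-4)
    by (auto intro!: mat_2_eqI simp: phase_covariant_map_index(1) simp del: of_real_add of_real_mult of_real_diff)
qed

lemma div_le_div_of_scaled_le:
  fixes C g s q q' :: real
  assumes "0 \<le> C" "0 \<le> g" "g \<le> s" "s * q \<le> q'" "0 \<le> q" "q = 0 \<Longrightarrow> C = 0"
  shows "C * g / q' \<le> C / q"
proof (cases "q = 0 \<or> q' = 0")
  case True
  then show ?thesis using assms by auto
next
  case False
  have "0 \<le> s * q" using assms by simp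
  then have "0 < q" "0 < q'" using False assms(4,5) by linarith+
  have "C * g * q \<le> C * (s * q)" using assms by (simp add: mult_left_mono mult_right_mono mult.assoc)
  also have "\<dots> \<le> C * q'" using assms by (simp add: mult_left_mono)
  finally show ?thesis using \<open>0 < q\<close> \<open>0 < q'\<close> by (simp add: field_simps)
qed

lemma coherence_ratios_le_of_phase_covariant:
  assumes p: "0 \<le> p" "p \<le> 1" "cmod c^2 \<le> p * (1 - p)"
    and ab: "0 \<le> a" "a \<le> 1" "0 \<le> b" "b \<le> 1" "cmod \<gamma>^2 \<le> a * b"
    and p': "p' = a * p + (1 - b) * (1 - p)"
  shows "cmod (\<gamma> * c)^2 / (1 - p') \<le> cmod c^2 / (1 - p)"
    and "cmod (\<gamma> * c)^2 / p' \<le> cmod c^2 / p"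
proof -
  have "a * b \<le> a" "a * b \<le> b"
    using ab mult_right_le_one_le[of a b] mult_left_le_one_le[of b a] by simp_all
  have "0 \<le> (1 - a) * p" "0 \<le> (1 - b) * (1 - p)" using p ab by simp_all
  have "cmod (\<gamma> * c)^2 = cmod c^2 * cmod \<gamma>^2" by (simp add: norm_mult power_mult_distrib)
  moreover have "cmod c^2 * cmod \<gamma>^2 / (1 - p') \<le> cmod c^2 / (1 - p)"
    using p ab \<open>a * b \<le> b\<close> \<open>0 \<le> (1 - a) * p\<close> unfolding p'
    by (intro div_le_div_of_scaled_le[where s = b]) (auto simp: algebra_simps)
  moreover have "cmod c^2 * cmod \<gamma>^2 / p' \<le> cmod c^2 / p"
    using p ab \<open>a * b \<le> a\<close> \<open>0 \<le> (1 - b) * (1 - p)\<close> unfolding p'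
    by (intro div_le_div_of_scaled_le[where s = a]) (auto simp: algebra_simps)
  ultimately show "cmod (\<gamma> * c)^2 / (1 - p') \<le> cmod c^2 / (1 - p)" "cmod (\<gamma> * c)^2 / p' \<le> cmod c^2 / p"
    by simp_all
qed

lemma population_params_of_coherence_ratios_le:
  assumes p: "0 \<le> p" "p \<le> 1" and p': "0 \<le> p'" "p' \<le> 1" "cmod c'^2 \<le> p' * (1 - p')"
    and ratio: "cmod c'^2 / (1 - p') \<le> cmod c^2 / (1 - p)" "cmod c'^2 / p' \<le> cmod c^2 / p"
  obtains a b where "0 \<le> a" "a \<le> 1" "0 \<le> b" "b \<le> 1" "p' = a * p + (1 - b) * (1 - p)"
    "cmod c'^2 \<le> a * b * cmod c^2"
proof (cases "p \<le> p'")
  case True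
  show ?thesis
  proof (cases "p' = 1")
    case True
    with p' have "cmod c'^2 \<le> 0" by simp
    with True show ?thesis by (intro that[of 1 0]) auto
  next
    case False
    with True p' have "p < 1" "0 < 1 - p'" by auto
    then have "cmod c'^2 \<le> (1 - p') / (1 - p) * cmod c^2"
      using ratio(1) by (simp add: field_simps)
    moreover have "(1 - p') / (1 - p) \<le> 1" using True \<open>p < 1\<close> by simp
    ultimately show ?thesis using True \<open>p < 1\<close> p'
      by (intro that[of 1 "(1 - p') / (1 - p)"]) (auto simp: field_simps)
  qed
next
  case False
  show ?thesis
  proof (cases "p' = 0")
    case True
    with p' have "cmod c'^2 \<le> 0" by simp
    with True False p show ?thesis by (intro that[of 0 1]) auto
  next
    case False
    with \<open>\<not> p \<le> p'\<close> p' have "0 < p'" "p' < p" by auto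
    then have "cmod c'^2 \<le> p' / p * cmod c^2"
      using ratio(2) by (simp add: field_simps)
    then show ?thesis using \<open>0 < p'\<close> \<open>p' < p\<close> by (intro that[of "p' / p" 1]) auto
  qed
qed

lemma phase_covariant_params_of_coherence_ratios_le:
  assumes p: "0 \<le> p" "p \<le> 1" and p': "0 \<le> p'" "p' \<le> 1" "cmod c'^2 \<le> p' * (1 - p')"
    and ratio: "cmod c'^2 / (1 - p') \<le> cmod c^2 / (1 - p)" "cmod c'^2 / p' \<le> cmod c^2 / p"
  obtains a b \<gamma> where "0 \<le> a" "a \<le> 1" "0 \<le> b" "b \<le> 1" "cmod \<gamma>^2 \<le> a * b"
    "p' = a * p + (1 - b) * (1 - p)" "c' = \<gamma> * c"
proof -
  obtain a b where ab: "0 \<le> a" "a \<le> 1" "0 \<le> b" "b \<le> 1" "p' = a * p + (1 - b) * (1 - p)"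
    and bound: "cmod c'^2 \<le> a * b * cmod c^2"
    using population_params_of_coherence_ratios_le[OF p p' ratio] .
  define \<gamma> where "\<gamma> = (if c = 0 then 0 else c' / c)"
  have "c' = \<gamma> * c"
  proof (cases "c = 0")
    case True
    then show ?thesis using bound by (simp add: \<gamma>_def)
  qed (simp add: \<gamma>_def)
  moreover have "cmod \<gamma>^2 \<le> a * b"
  proof (cases "c = 0")
    case True
    then show ?thesis using ab by (simp add: \<gamma>_def)
  next
    case False
    then show ?thesis using bound by (simp add: \<gamma>_def norm_divide power_divide divide_le_eq)
  qed
  ultimately show ?thesis using ab that by blast
qed

lemma time_covariant_channel_exists_iff:
  assumes \<rho>: "qubit_state \<rho>" and \<sigma>: "qubit_state \<sigma>"
  shows "(\<exists>E. qubit_channel E \<and> time_covariant E \<and> E \<rho> = \<sigma>) \<longleftrightarrow>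
    coherence_over_pop1 \<sigma> \<le> coherence_over_pop1 \<rho> \<and> coherence_over_pop0 \<sigma> \<le> coherence_over_pop0 \<rho>"
proof
  note R = qubit_state_entries[OF \<rho>]
  assume "\<exists>E. qubit_channel E \<and> time_covariant E \<and> E \<rho> = \<sigma>"
  then obtain E where E: "qubit_channel E" "time_covariant E" "E \<rho> = \<sigma>" by blast
  obtain a b \<gamma> where params: "0 \<le> a" "a \<le> 1" "0 \<le> b" "b \<le> 1" "cmod \<gamma>^2 \<le> a * b"
    and "\<And>X. X \<in> carrier_mat 2 2 \<Longrightarrow> E X = phase_covariant_map a b \<gamma> X"
    using time_covariant_channel_eq_phase_covariant_map[OF E(1,2)] by blast
  then have "phase_covariant_map a b \<gamma> \<rho> = \<sigma>" using E(3) R(1) by simp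
  then have "pop0 \<sigma> = a * pop0 \<rho> + (1 - b) * (1 - pop0 \<rho>)" "coh \<sigma> = \<gamma> * coh \<rho>"
    unfolding phase_covariant_map_state_eq_iff[OF \<rho> \<sigma>] by simp_all
  with coherence_ratios_le_of_phase_covariant[OF R(5-7) params] show
    "coherence_over_pop1 \<sigma> \<le> coherence_over_pop1 \<rho> \<and> coherence_over_pop0 \<sigma> \<le> coherence_over_pop0 \<rho>"
    unfolding coherence_over_pop0_def coherence_over_pop1_def by simp
next
  note R = qubit_state_entries[OF \<rho>] and S = qubit_state_entries[OF \<sigma>]
  assume "coherence_over_pop1 \<sigma> \<le> coherence_over_pop1 \<rho> \<and> coherence_over_pop0 \<sigma> \<le> coherence_over_pop0 \<rho>"
  then obtain a b \<gamma> where params: "0 \<le> a" "a \<le> 1" "0 \<le> b" "b \<le> 1" "cmod \<gamma>^2 \<le> a * b"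
    and "pop0 \<sigma> = a * pop0 \<rho> + (1 - b) * (1 - pop0 \<rho>)" "coh \<sigma> = \<gamma> * coh \<rho>"
    using phase_covariant_params_of_coherence_ratios_le[OF R(5,6) S(5-7)]
    unfolding coherence_over_pop0_def coherence_over_pop1_def by blast
  then have "phase_covariant_map a b \<gamma> \<rho> = \<sigma>" unfolding phase_covariant_map_state_eq_iff[OF \<rho> \<sigma>] by simp
  moreover have "qubit_channel (phase_covariant_map a b \<gamma>)"
    unfolding qubit_channel_def using params
    by (simp add: phase_covariant_map_linear phase_covariant_map_completely_positive
        phase_covariant_map_trace_preserving)
  ultimately show "\<exists>E. qubit_channel E \<and> time_covariant E \<and> E \<rho> = \<sigma>"
    using phase_covariant_map_time_covariant by blast
qed

theorem lemma16:
  fixes \<rho> \<sigma> :: "complex mat"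
  assumes "qubit_state \<rho>" and "qubit_state \<sigma>"
  shows "((\<exists>E. qubit_channel E \<and> time_covariant E \<and> E \<rho> = \<sigma>) \<longleftrightarrow>
            (\<forall>r \<phi>. 0 < r \<and> r \<le> 1 \<and> 0 \<le> \<phi> \<and> \<phi> < 2*pi \<longrightarrow>
               deriv (deriv (\<lambda>\<theta>. Phi (eta r \<theta> \<phi>) \<rho> - Phi (eta r \<theta> \<phi>) \<sigma>)) 0 \<ge> 0 \<and>
               deriv (deriv (\<lambda>\<theta>. Phi (eta r \<theta> \<phi>) \<rho> - Phi (eta r \<theta> \<phi>) \<sigma>)) pi \<ge> 0))
       \<and> ((\<exists>E. qubit_channel E \<and> time_covariant E \<and> E \<rho> = \<sigma>) \<longleftrightarrow>
            (\<forall>r \<phi>. 0 < r \<and> r \<le> 1 \<and> 0 \<le> \<phi> \<and> \<phi> < 2*pi \<longrightarrow>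
               deriv (deriv (\<lambda>\<theta>. H (eta r \<theta> \<phi>) \<sigma> - H (eta r \<theta> \<phi>) \<rho>)) 0 \<ge> 0 \<and>
               deriv (deriv (\<lambda>\<theta>. H (eta r \<theta> \<phi>) \<sigma> - H (eta r \<theta> \<phi>) \<rho>)) pi \<ge> 0))"
proof -
  have all_iff: "(\<forall>r \<phi>. 0 < r \<and> r \<le> 1 \<and> 0 \<le> \<phi> \<and> \<phi> < 2*pi \<longrightarrow> Q r \<phi>) \<longleftrightarrow> R"
    if "\<And>r \<phi>. 0 < r \<Longrightarrow> r \<le> 1 \<Longrightarrow> Q r \<phi> \<longleftrightarrow> R" for Q :: "real \<Rightarrow> real \<Rightarrow> bool" and R
  proof
    assume "\<forall>r \<phi>. 0 < r \<and> r \<le> 1 \<and> 0 \<le> \<phi> \<and> \<phi> < 2*pi \<longrightarrow> Q r \<phi>"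
    then have "Q 1 0" using pi_gt_zero by simp
    then show R using that[of 1 0] by simp
  qed (use that in auto)
  show ?thesis unfolding time_covariant_channel_exists_iff[OF assms]
    by (intro conjI all_iff[symmetric]) (rule deriv2_nonneg_at_poles_iff[OF assms]; assumption)+
qed

end
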